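(* Let $(M,\mathbf g)$ be a $(d+1)$-dimensional spacetime carrying a steady flow of radiation fluid with respect to a timelike Killing vector field $\boldsymbol\xi$ on a neighborhood $U$ of a point $p$, with fluid variables of class $C^2$ near $p$. If $p$ is a sonic point, then $$\boldsymbol\sigma(\bar{\boldsymbol\xi},\bar{\boldsymbol\xi})|_p=0,\qquad \mathcal L_{\bar{\boldsymbol\eta}}\big[\boldsymbol\sigma(\bar{\boldsymbol\xi},\bar{\boldsymbol\xi})\big]\big|_p\ge 0,$$ where $\boldsymbol\sigma$ is the shear tensor of the streamline congruence.
   Context: A perfect fluid on a $(d+1)$-dimensional Lorentzian spacetime consists of positive functions $n,h,P,s,T$ (number density, specific enthalpy, pressure, specific entropy, temperature) and a vector field $\mathbf u$, $\mathbf u\cdot\mathbf u=-1$, satisfying $\mathbf d h=T\,\mathbf d s+n^{-1}\mathbf d P$, $\nabla\cdot(n\mathbf u)=0$, $\nabla\cdot(nh\,\mathbf u\otimes\mathbf u+P\,\mathbf g^{-1})=0$ and an equation of state $h=h(P,s)$, with speed of sound $v_{\rm s}^2=(\partial\ln h/\partial\ln n)_s$. A radiation fluid is one whose equation of state gives $v_{\rm s}\equiv1/\sqrt d$. The flow is steady w.r.t. the timelike Killing field $\boldsymbol\xi$ on $U$ if $\mathcal L_{\boldsymbol\xi}P=\mathcal L_{\boldsymbol\xi}s=0$, $\mathcal L_{\boldsymbol\xi}\mathbf u=0$. Set $\bar{\boldsymbol\xi}=\boldsymbol\xi/\sqrt{|\boldsymbol\xi\cdot\boldsymbol\xi|}$,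 write $\mathbf u=(1-v^2)^{-1/2}(\bar{\boldsymbol\xi}+v\bar{\boldsymbol\eta})$ with $v\in[0,1)$, $\bar{\boldsymbol\eta}$ unit spacelike orthogonal to $\bar{\boldsymbol\xi}$ and $\mathcal L_{\boldsymbol\xi}\bar{\boldsymbol\eta}=0$ (integral curves of $\bar{\boldsymbol\eta}$: streamlines). With $B_{\mu\nu}=\nabla_\mu\bar\eta_\nu$, $\mathbf a=\nabla_{\bar{\boldsymbol\eta}}\bar{\boldsymbol\eta}$, $\mathbf g^\perp=\mathbf g-\bar{\boldsymbol\eta}^\flat\otimes\bar{\boldsymbol\eta}^\flat$, decompose $\mathbf B-\bar{\boldsymbol\eta}^\flat\otimes\mathbf a^\flat=\frac{\Theta}{d}\mathbf g^\perp+\boldsymbol\sigma+\boldsymbol\omega$ with $\Theta=\nabla\cdot\bar{\boldsymbol\eta}$, $\boldsymbol\sigma$ symmetric trace-free (shear), $\boldsymbol\omega$ antisymmetric. A sonic point is a point with $v=v_{\rm s}$. *)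

theory Defs
  imports "HOL-Analysis.Analysis"
begin

text \<open>Everything is expressed in a coordinate chart: points of the chart domain are
vectors in real^'n, where CARD('n) = d+1.  Vector fields are maps real^'n => real^'n
(contravariant components X$mu), covector fields likewise (covariant components),
the metric is a field of matrices G x $ mu $ nu.\<close>

definition pd :: "(real^'n \<Rightarrow> real) \<Rightarrow> 'n \<Rightarrow> real^'n \<Rightarrow> real" where
  "pd f i x = frechet_derivative f (at x) (axis i 1)"

fun Ck :: "nat \<Rightarrow> (real^'n) set \<Rightarrow> (real^'n \<Rightarrow> real) \<Rightarrow> bool" where
  "Ck 0 U f = continuous_on U f"
| "Ck (Suc k) U f = ((\<forall>x\<in>U. f differentiable (at x)) \<and> (\<forall>i. Ck k U (pd f i)))"

definition smooth_on :: "(real^'n) set \<Rightarrow> (real^'n \<Rightarrow> real) \<Rightarrow> bool" where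
  "smooth_on U f = (\<forall>k. Ck k U f)"

definition lorentzian_matrix :: "real^'n^'n \<Rightarrow> bool" where
  "lorentzian_matrix A = (transpose A = A \<and>
     (\<exists>t::'n. \<exists>C::real^'n^'n. invertible C \<and>
        transpose C ** A ** C = (\<chi> i j. if i = j then (if i = t then -1 else 1) else 0)))"

definition ginv :: "(real^'n \<Rightarrow> real^'n^'n) \<Rightarrow> real^'n \<Rightarrow> real^'n^'n" where
  "ginv G x = matrix_inv (G x)"

definition christoffel :: "(real^'n \<Rightarrow> real^'n^'n) \<Rightarrow> 'n \<Rightarrow> 'n \<Rightarrow> 'n \<Rightarrow> real^'n \<Rightarrow> real" where
  "christoffel G l m n x = (1/2) * (\<Sum>k\<in>UNIV. ginv G x $ l $ k *
      (pd (\<lambda>y. G y $ k $ n) m x + pd (\<lambda>y. G y $ k $ m) n x - pd (\<lambda>y. G y $ m $ n) k x))"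

definition gdot :: "(real^'n \<Rightarrow> real^'n^'n) \<Rightarrow> real^'n \<Rightarrow> real^'n \<Rightarrow> real^'n \<Rightarrow> real" where
  "gdot G x X Y = (\<Sum>m\<in>UNIV. \<Sum>n\<in>UNIV. G x $ m $ n * X $ m * Y $ n)"

definition lower :: "(real^'n \<Rightarrow> real^'n^'n) \<Rightarrow> (real^'n \<Rightarrow> real^'n) \<Rightarrow> real^'n \<Rightarrow> real^'n" where
  "lower G X x = (\<chi> n. \<Sum>l\<in>UNIV. G x $ n $ l * X x $ l)"

definition cd_covec :: "(real^'n \<Rightarrow> real^'n^'n) \<Rightarrow> (real^'n \<Rightarrow> real^'n) \<Rightarrow> 'n \<Rightarrow> 'n \<Rightarrow> real^'n \<Rightarrow> real" where
  "cd_covec G w m n x = pd (\<lambda>y. w y $ n) m x - (\<Sum>l\<in>UNIV. christoffel G l m n x * w x $ l)"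

definition cd_vec :: "(real^'n \<Rightarrow> real^'n^'n) \<Rightarrow> (real^'n \<Rightarrow> real^'n) \<Rightarrow> 'n \<Rightarrow> 'n \<Rightarrow> real^'n \<Rightarrow> real" where
  "cd_vec G X m n x = pd (\<lambda>y. X y $ n) m x + (\<Sum>l\<in>UNIV. christoffel G n m l x * X x $ l)"

definition div_vec :: "(real^'n \<Rightarrow> real^'n^'n) \<Rightarrow> (real^'n \<Rightarrow> real^'n) \<Rightarrow> real^'n \<Rightarrow> real" where
  "div_vec G X x = (\<Sum>m\<in>UNIV. cd_vec G X m m x)"

definition div_tensor :: "(real^'n \<Rightarrow> real^'n^'n) \<Rightarrow> (real^'n \<Rightarrow> real^'n^'n) \<Rightarrow> 'n \<Rightarrow> real^'n \<Rightarrow> real" where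
  "div_tensor G T n x = (\<Sum>m\<in>UNIV. pd (\<lambda>y. T y $ m $ n) m x)
     + (\<Sum>m\<in>UNIV. \<Sum>l\<in>UNIV. christoffel G m m l x * T x $ l $ n)
     + (\<Sum>m\<in>UNIV. \<Sum>l\<in>UNIV. christoffel G n m l x * T x $ m $ l)"

definition lie_fun :: "(real^'n \<Rightarrow> real^'n) \<Rightarrow> (real^'n \<Rightarrow> real) \<Rightarrow> real^'n \<Rightarrow> real" where
  "lie_fun X f x = (\<Sum>m\<in>UNIV. X x $ m * pd f m x)"

definition lie_vec :: "(real^'n \<Rightarrow> real^'n) \<Rightarrow> (real^'n \<Rightarrow> real^'n) \<Rightarrow> real^'n \<Rightarrow> real^'n" where
  "lie_vec X Y x = (\<chi> n. \<Sum>m\<in>UNIV. X x $ m * pd (\<lambda>y. Y y $ n) m x - Y x $ m * pd (\<lambda>y. X y $ n) m x)"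

definition killing_on :: "(real^'n \<Rightarrow> real^'n^'n) \<Rightarrow> (real^'n \<Rightarrow> real^'n) \<Rightarrow> (real^'n) set \<Rightarrow> bool" where
  "killing_on G X U = (\<forall>x\<in>U. \<forall>m n. (\<Sum>l\<in>UNIV. X x $ l * pd (\<lambda>y. G y $ m $ n) l x
       + G x $ l $ n * pd (\<lambda>y. X y $ l) m x + G x $ m $ l * pd (\<lambda>y. X y $ l) n x) = 0)"

text \<open>Equation of state h = H(P,s).  Thermodynamics (dh = T ds + n^{-1} dP) gives the
state functions n = (dh/dP)_s^{-1}, T = (dh/ds)_P.\<close>
definition eos_hP :: "(real \<Rightarrow> real \<Rightarrow> real) \<Rightarrow> real \<Rightarrow> real \<Rightarrow> real" where
  "eos_hP H P s = deriv (\<lambda>q. H q s) P"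

definition eos_hs :: "(real \<Rightarrow> real \<Rightarrow> real) \<Rightarrow> real \<Rightarrow> real \<Rightarrow> real" where
  "eos_hs H P s = deriv (\<lambda>r. H P r) s"

definition eos_n :: "(real \<Rightarrow> real \<Rightarrow> real) \<Rightarrow> real \<Rightarrow> real \<Rightarrow> real" where
  "eos_n H P s = 1 / eos_hP H P s"

text \<open>Squared speed of sound (d ln h / d ln n)_s, computed along fixed s with P as parameter.\<close>
definition sound_speed_sq :: "(real \<Rightarrow> real \<Rightarrow> real) \<Rightarrow> real \<Rightarrow> real \<Rightarrow> real" where
  "sound_speed_sq H P s = deriv (\<lambda>q. ln (H q s)) P / deriv (\<lambda>q. ln (eos_n H q s)) P"

definition radiation_eos :: "real \<Rightarrow> (real \<Rightarrow> real \<Rightarrow> real) \<Rightarrow> bool" where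
  "radiation_eos d H = (\<forall>P>0. \<forall>s>0.
      H P s > 0 \<and> eos_hP H P s > 0 \<and>
      (\<lambda>q. H q s) differentiable (at P) \<and> (\<lambda>q. eos_hP H q s) differentiable (at P) \<and>
      (\<lambda>r. H P r) differentiable (at s) \<and>
      sound_speed_sq H P s = 1 / d)"

definition perfect_fluid_on ::
  "(real^'n \<Rightarrow> real^'n^'n) \<Rightarrow> (real^'n) set \<Rightarrow> (real \<Rightarrow> real \<Rightarrow> real) \<Rightarrow>
   (real^'n \<Rightarrow> real) \<Rightarrow> (real^'n \<Rightarrow> real) \<Rightarrow> (real^'n \<Rightarrow> real) \<Rightarrow> (real^'n \<Rightarrow> real) \<Rightarrow>
   (real^'n \<Rightarrow> real) \<Rightarrow> (real^'n \<Rightarrow> real^'n) \<Rightarrow> bool" where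
  "perfect_fluid_on G U H n h P s T u =
    ((\<forall>x\<in>U. n x > 0 \<and> h x > 0 \<and> P x > 0 \<and> s x > 0 \<and> T x > 0) \<and>
     (\<forall>x\<in>U. gdot G x (u x) (u x) = -1) \<and>
     (\<forall>x\<in>U. \<forall>m. pd h m x = T x * pd s m x + pd P m x / n x) \<and>
     (\<forall>x\<in>U. div_vec G (\<lambda>y. n y *\<^sub>R u y) x = 0) \<and>
     (\<forall>x\<in>U. \<forall>k. div_tensor G (\<lambda>y. \<chi> i j. n y * h y * u y $ i * u y $ j + P y * ginv G y $ i $ j) k x = 0) \<and>
     (\<forall>x\<in>U. h x = H (P x) (s x) \<and> n x = eos_n H (P x) (s x) \<and> T x = eos_hs H (P x) (s x)))"

end

theory Submission
  imports Defs
begin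

text \<open>Killing's equation turns the \<open>\<xi>\<xi>\<close>-component of \<open>\<nabla>\<eta>\<^sup>\<flat>\<close> into
\<open>\<eta>(\<xi>\<cdot>\<xi>)/2\<close>, so that \<open>\<sigma>(\<xi>b,\<xi>b) = \<eta>(\<xi>\<cdot>\<xi>)/(2|\<xi>\<cdot>\<xi>|) + \<Theta>/d\<close>.
Writing the particle current as \<open>n u = a \<xi> + b \<eta>\<close>, steady continuity reads
\<open>\<eta>(b) + b \<Theta> = 0\<close>, which expresses \<open>\<Theta>\<close> through the \<open>\<eta>\<close>-derivatives of \<open>n\<close>, \<open>v\<close>,
the Killing energy \<open>E = u\<cdot>\<xi>\<close> and \<open>|\<xi>|\<close>.  Contracting the Euler equations with \<open>\<xi>\<close> and
\<open>u\<close> gives the Bernoulli law \<open>u(hE) = 0\<close> and adiabaticity \<open>u(s) = 0\<close>; by steadiness these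
become \<open>\<eta>(hE) = \<eta>(s) = 0\<close>, and the radiation equation of state \<open>n \<propto> h\<^sup>d\<close> (at fixed
\<open>s\<close>) turns them into a formula for \<open>\<eta>(n)\<close>.  Eliminating everything leaves
\<open>\<sigma>(\<xi>b,\<xi>b) = F(v) \<eta>(v)\<close> with \<open>F(v) = (v\<^sup>2 - 1/d)/(v(1 - v\<^sup>2))\<close>.  At a sonic point
\<open>F\<close> vanishes and \<open>F' > 0\<close>, hence \<open>\<sigma>(\<xi>b,\<xi>b) = 0\<close> and
\<open>\<eta>[\<sigma>(\<xi>b,\<xi>b)] = F'(v) \<eta>(v)\<^sup>2 \<ge> 0\<close>.\<close>

section \<open>Partial derivatives and derivatives along vector fields\<close>

lemma has_derivative_imp_pd: "(f has_derivative D) (at x) \<Longrightarrow> pd f i x = D (axis i 1)"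
  unfolding pd_def using frechet_derivative_at by metis

lemma pd_cong_open:
  assumes "open W" "x \<in> W" "\<And>y. y \<in> W \<Longrightarrow> f y = g y"
  shows "pd f i x = pd g i x"
proof -
  have "\<And>D. (f has_derivative D) (at x) \<longleftrightarrow> (g has_derivative D) (at x)"
    using has_derivative_transform_within_open assms by metis
  then show ?thesis unfolding pd_def frechet_derivative_def by simp
qed

lemma differentiable_cong_open:
  assumes "open W" "x \<in> W" "\<And>y. y \<in> W \<Longrightarrow> f y = g y" "f differentiable (at x)"
  shows "g differentiable (at x)"
  using assms has_derivative_transform_within_open unfolding differentiable_def by metis

lemma pd_const [simp]: "pd (\<lambda>y. c) i x = 0"
  using has_derivative_imp_pd[of "\<lambda>y. c" "\<lambda>h. 0" x i] by simp

lemma pd_add: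
  assumes "f differentiable (at x)" "g differentiable (at x)"
  shows "pd (\<lambda>y. f y + g y) i x = pd f i x + pd g i x"
  using has_derivative_imp_pd[OF has_derivative_add[OF frechet_derivative_works[THEN iffD1, OF assms(1)]
         frechet_derivative_works[THEN iffD1, OF assms(2)]]] unfolding pd_def by simp

lemma pd_diff:
  assumes "f differentiable (at x)" "g differentiable (at x)"
  shows "pd (\<lambda>y. f y - g y) i x = pd f i x - pd g i x"
  using has_derivative_imp_pd[OF has_derivative_diff[OF frechet_derivative_works[THEN iffD1, OF assms(1)]
         frechet_derivative_works[THEN iffD1, OF assms(2)]]] unfolding pd_def by simp

lemma pd_mult:
  assumes "f differentiable (at x)" "g differentiable (at x)"
  shows "pd (\<lambda>y. f y * g y) i x = pd f i x * g x + f x * pd g i x"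
  using has_derivative_imp_pd[OF has_derivative_mult[OF frechet_derivative_works[THEN iffD1, OF assms(1)]
         frechet_derivative_works[THEN iffD1, OF assms(2)]]] unfolding pd_def by simp

lemma pd_cmult:
  assumes "f differentiable (at x)"
  shows "pd (\<lambda>y. c * f y) i x = c * pd f i x"
  using pd_mult[OF differentiable_const assms] by simp

lemma pd_sum:
  assumes "finite S" "\<And>l. l \<in> S \<Longrightarrow> f l differentiable (at x)"
  shows "pd (\<lambda>y. \<Sum>l\<in>S. f l y) i x = (\<Sum>l\<in>S. pd (f l) i x)"
proof -
  have "((\<lambda>y. \<Sum>l\<in>S. f l y) has_derivative (\<lambda>h. \<Sum>l\<in>S. frechet_derivative (f l) (at x) h)) (at x)"
    by (rule has_derivative_sum) (use assms frechet_derivative_works in blast)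
  from has_derivative_imp_pd[OF this] show ?thesis unfolding pd_def by simp
qed

lemma pd_chain:
  assumes "(\<phi> has_real_derivative d) (at (f x))" "f differentiable (at x)"
  shows "pd (\<lambda>y. \<phi> (f y)) i x = d * pd f i x"
proof -
  have "((\<lambda>y. \<phi> (f y)) has_derivative (\<lambda>h. d * frechet_derivative f (at x) h)) (at x)"
    using has_derivative_compose[OF frechet_derivative_works[THEN iffD1, OF assms(2)]
        assms(1)[unfolded has_field_derivative_def]] by (simp add: mult.commute)
  from has_derivative_imp_pd[OF this] show ?thesis unfolding pd_def by simp
qed

lemma differentiable_compose_real:
  assumes "(\<phi> has_real_derivative d) (at (f x))" "f differentiable (at x)"
  shows "(\<lambda>y. \<phi> (f y)) differentiable (at x)"
  using has_derivative_compose[OF frechet_derivative_works[THEN iffD1, OF assms(2)]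
        assms(1)[unfolded has_field_derivative_def]] unfolding differentiable_def by blast

lemma differentiable_inverse_real:
  fixes f :: "real^'m \<Rightarrow> real"
  assumes "f differentiable (at x)" "f x \<noteq> 0"
  shows "(\<lambda>y. inverse (f y)) differentiable (at x)"
  by (rule differentiable_compose_real[OF DERIV_inverse[OF assms(2)] assms(1)])

lemma lie_fun_const: "lie_fun X (\<lambda>y. c) x = 0"
  unfolding lie_fun_def by simp

lemma lie_fun_mult:
  assumes "f differentiable (at x)" "g differentiable (at x)"
  shows "lie_fun X (\<lambda>y. f y * g y) x = lie_fun X f x * g x + f x * lie_fun X g x"
  unfolding lie_fun_def pd_mult[OF assms]
  by (simp add: sum.distrib sum_distrib_left sum_distrib_right algebra_simps)

lemma lie_fun_diff:
  assumes "f differentiable (at x)" "g differentiable (at x)"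
  shows "lie_fun X (\<lambda>y. f y - g y) x = lie_fun X f x - lie_fun X g x"
  unfolding lie_fun_def pd_diff[OF assms] by (simp add: sum_subtractf algebra_simps)

lemma lie_fun_cmult:
  assumes "f differentiable (at x)"
  shows "lie_fun X (\<lambda>y. c * f y) x = c * lie_fun X f x"
  unfolding lie_fun_def pd_cmult[OF assms] by (simp add: sum_distrib_left algebra_simps)

lemma lie_fun_chain:
  assumes "(\<phi> has_real_derivative d) (at (f x))" "f differentiable (at x)"
  shows "lie_fun X (\<lambda>y. \<phi> (f y)) x = d * lie_fun X f x"
  unfolding lie_fun_def pd_chain[OF assms] by (simp add: sum_distrib_left algebra_simps)

lemma lie_fun_cong_open:
  assumes "open W" "x \<in> W" "\<And>y. y \<in> W \<Longrightarrow> f y = g y"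
  shows "lie_fun X f x = lie_fun X g x"
  unfolding lie_fun_def using pd_cong_open[OF assms] by simp

lemma lie_fun_combination:
  assumes "X x = a *\<^sub>R A x + b *\<^sub>R B x"
  shows "lie_fun X f x = a * lie_fun A f x + b * lie_fun B f x"
  unfolding lie_fun_def assms by (simp add: sum.distrib sum_distrib_left algebra_simps)

definition twice_diff_on :: "(real^'n) set \<Rightarrow> (real^'n \<Rightarrow> real) \<Rightarrow> bool" where
  "twice_diff_on W f = (\<forall>y\<in>W. f differentiable (at y) \<and> (\<forall>i. pd f i differentiable (at y)))"

lemma Ck2_imp_twice_diff_on: "Ck 2 U f \<Longrightarrow> twice_diff_on U f"
  unfolding twice_diff_on_def by (simp add: numeral_2_eq_2)

lemma smooth_on_imp_twice_diff_on: "smooth_on U f \<Longrightarrow> twice_diff_on U f"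
  unfolding smooth_on_def by (rule Ck2_imp_twice_diff_on) blast

lemma twice_diff_on_differentiable: "twice_diff_on W f \<Longrightarrow> y \<in> W \<Longrightarrow> f differentiable (at y)"
  unfolding twice_diff_on_def by blast

lemma twice_diff_on_pd_differentiable: "twice_diff_on W f \<Longrightarrow> y \<in> W \<Longrightarrow> pd f i differentiable (at y)"
  unfolding twice_diff_on_def by blast

lemma twice_diff_on_const: "twice_diff_on W (\<lambda>y. c)"
proof -
  have pd_zero: "pd (\<lambda>y. c) i = (\<lambda>y. 0)" for i by (rule ext) simp
  show ?thesis unfolding twice_diff_on_def pd_zero by simp
qed

lemma twice_diff_on_subset: "twice_diff_on W f \<Longrightarrow> V \<subseteq> W \<Longrightarrow> twice_diff_on V f"
  unfolding twice_diff_on_def by blast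

lemma twice_diff_on_cong_open:
  assumes f: "twice_diff_on W f" and W: "open W" and eq: "\<And>y. y \<in> W \<Longrightarrow> f y = g y"
  shows "twice_diff_on W g"
  unfolding twice_diff_on_def
proof (intro ballI conjI allI)
  fix y i assume y: "y \<in> W"
  show "g differentiable (at y)"
    by (rule differentiable_cong_open[OF W y eq twice_diff_on_differentiable[OF f y]])
  have "\<And>z. z \<in> W \<Longrightarrow> pd f i z = pd g i z" by (rule pd_cong_open[OF W _ eq])
  then show "pd g i differentiable (at y)"
    by (rule differentiable_cong_open[OF W y _ twice_diff_on_pd_differentiable[OF f y]])
qed

lemma twice_diff_on_add:
  assumes f: "twice_diff_on W f" and g: "twice_diff_on W g" and W: "open W"
  shows "twice_diff_on W (\<lambda>y. f y + g y)"
  unfolding twice_diff_on_def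
proof (intro ballI conjI allI)
  fix y i assume y: "y \<in> W"
  show "(\<lambda>y. f y + g y) differentiable (at y)"
    using twice_diff_on_differentiable[OF f y] twice_diff_on_differentiable[OF g y]
    by (rule differentiable_add)
  have "\<And>z. z \<in> W \<Longrightarrow> pd f i z + pd g i z = pd (\<lambda>y. f y + g y) i z"
    by (rule pd_add[symmetric, OF twice_diff_on_differentiable[OF f] twice_diff_on_differentiable[OF g]])
  moreover have "(\<lambda>z. pd f i z + pd g i z) differentiable (at y)"
    using twice_diff_on_pd_differentiable[OF f y] twice_diff_on_pd_differentiable[OF g y]
    by (rule differentiable_add)
  ultimately show "pd (\<lambda>y. f y + g y) i differentiable (at y)"
    by (rule differentiable_cong_open[OF W y])
qed

lemma twice_diff_on_mult:
  assumes f: "twice_diff_on W f" and g: "twice_diff_on W g" and W: "open W"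
  shows "twice_diff_on W (\<lambda>y. f y * g y)"
  unfolding twice_diff_on_def
proof (intro ballI conjI allI)
  fix y i assume y: "y \<in> W"
  show "(\<lambda>y. f y * g y) differentiable (at y)"
    using twice_diff_on_differentiable[OF f y] twice_diff_on_differentiable[OF g y]
    by (rule differentiable_mult)
  have "\<And>z. z \<in> W \<Longrightarrow> pd f i z * g z + f z * pd g i z = pd (\<lambda>y. f y * g y) i z"
    by (rule pd_mult[symmetric, OF twice_diff_on_differentiable[OF f] twice_diff_on_differentiable[OF g]])
  moreover have "(\<lambda>z. pd f i z * g z + f z * pd g i z) differentiable (at y)"
    using twice_diff_on_pd_differentiable[OF f y] twice_diff_on_pd_differentiable[OF g y]
      twice_diff_on_differentiable[OF f y] twice_diff_on_differentiable[OF g y]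
    by (intro differentiable_add differentiable_mult)
  ultimately show "pd (\<lambda>y. f y * g y) i differentiable (at y)"
    by (rule differentiable_cong_open[OF W y])
qed

lemma twice_diff_on_diff:
  assumes "twice_diff_on W f" "twice_diff_on W g" "open W"
  shows "twice_diff_on W (\<lambda>y. f y - g y)"
proof -
  have "twice_diff_on W (\<lambda>y. f y + (-1) * g y)"
    using assms by (intro twice_diff_on_add twice_diff_on_mult twice_diff_on_const)
  then show ?thesis by simp
qed

lemma twice_diff_on_sum:
  assumes "finite S" "\<And>l. l \<in> S \<Longrightarrow> twice_diff_on W (f l)" "open W"
  shows "twice_diff_on W (\<lambda>y. \<Sum>l\<in>S. f l y)"
  using assms(1,2)
proof (induction S rule: finite_induct)
  case empty
  then show ?case using twice_diff_on_const[of W 0] by simp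
next
  case (insert a S)
  have "twice_diff_on W (\<lambda>y. f a y + (\<Sum>l\<in>S. f l y))"
    by (rule twice_diff_on_add) (use insert assms(3) in auto)
  then show ?case using insert by simp
qed

lemma twice_diff_on_gdot:
  assumes "open W" "\<And>i j. twice_diff_on W (\<lambda>y. G y $ i $ j)"
    "\<And>i. twice_diff_on W (\<lambda>y. A y $ i)" "\<And>i. twice_diff_on W (\<lambda>y. B y $ i)"
  shows "twice_diff_on W (\<lambda>y. gdot G y (A y) (B y))"
  unfolding gdot_def using assms by (intro twice_diff_on_sum twice_diff_on_mult) auto

lemma twice_diff_on_compose:
  assumes f: "twice_diff_on W f" and W: "open W"
    and \<phi>: "\<And>y. y \<in> W \<Longrightarrow> (\<phi> has_real_derivative \<phi>' (f y)) (at (f y))"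
    and \<phi>': "\<And>y. y \<in> W \<Longrightarrow> \<phi>' differentiable (at (f y))"
  shows "twice_diff_on W (\<lambda>y. \<phi> (f y))"
  unfolding twice_diff_on_def
proof (intro ballI conjI allI)
  fix y i assume y: "y \<in> W"
  show "(\<lambda>y. \<phi> (f y)) differentiable (at y)"
    by (rule differentiable_compose_real[OF \<phi>[OF y] twice_diff_on_differentiable[OF f y]])
  have "\<And>z. z \<in> W \<Longrightarrow> \<phi>' (f z) * pd f i z = pd (\<lambda>y. \<phi> (f y)) i z"
    by (rule pd_chain[symmetric, OF \<phi> twice_diff_on_differentiable[OF f]])
  moreover have "(\<lambda>z. \<phi>' (f z) * pd f i z) differentiable (at y)"
  proof (rule differentiable_mult)
    show "(\<lambda>z. \<phi>' (f z)) differentiable (at y)"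
      using differentiable_chain_at[OF twice_diff_on_differentiable[OF f y] \<phi>'[OF y]] by (simp add: o_def)
    show "pd f i differentiable (at y)" using twice_diff_on_pd_differentiable[OF f y] .
  qed
  ultimately show "pd (\<lambda>y. \<phi> (f y)) i differentiable (at y)"
    by (rule differentiable_cong_open[OF W y])
qed

lemma twice_diff_on_sqrt:
  assumes "twice_diff_on W f" "open W" "\<And>y. y \<in> W \<Longrightarrow> f y > 0"
  shows "twice_diff_on W (\<lambda>y. sqrt (f y))"
proof (rule twice_diff_on_compose[OF assms(1,2), of sqrt "\<lambda>t. inverse (sqrt t) / 2"])
  fix y assume y: "y \<in> W"
  show "(sqrt has_real_derivative inverse (sqrt (f y)) / 2) (at (f y))"
    using DERIV_real_sqrt[OF assms(3)[OF y]] .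
  have "DERIV (\<lambda>t. inverse (sqrt t)) (f y)
      :> - (inverse (sqrt (f y)) / 2 * inverse (sqrt (f y) ^ Suc (Suc 0)))"
    by (rule DERIV_inverse_fun[OF DERIV_real_sqrt]) (use assms(3)[OF y] in auto)
  from DERIV_cdivide[OF this, of 2]
  show "(\<lambda>t. inverse (sqrt t) / 2) differentiable (at (f y))"
    using real_differentiable_def by blast
qed

lemma twice_diff_on_inverse:
  assumes "twice_diff_on W f" "open W" "\<And>y. y \<in> W \<Longrightarrow> f y \<noteq> 0"
  shows "twice_diff_on W (\<lambda>y. inverse (f y))"
proof (rule twice_diff_on_compose[OF assms(1,2), of inverse "\<lambda>t. - (inverse t ^ Suc (Suc 0))"])
  fix y assume y: "y \<in> W"
  show "(inverse has_real_derivative - (inverse (f y) ^ Suc (Suc 0))) (at (f y))"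
    using DERIV_inverse[OF assms(3)[OF y]] .
  from DERIV_minus[OF DERIV_power[OF DERIV_inverse[OF assms(3)[OF y]], of "Suc (Suc 0)"]]
  show "(\<lambda>t. - (inverse t ^ Suc (Suc 0))) differentiable (at (f y))"
    using real_differentiable_def by blast
qed

lemma twice_diff_on_imp_continuous_on: "twice_diff_on W f \<Longrightarrow> continuous_on W f"
  by (meson twice_diff_on_differentiable continuous_at_imp_continuous_on differentiable_imp_continuous_within)

lemma lorentzian_matrix_invertible:
  fixes A :: "real^'n^'n"
  assumes "lorentzian_matrix A" shows "invertible A"
proof -
  obtain t :: 'n and C :: "real^'n^'n" where C: "invertible C"
    "transpose C ** A ** C = (\<chi> i j. if i = j then (if i = t then -1 else 1) else 0)"
    using assms unfolding lorentzian_matrix_def by blast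
  let ?D = "(\<chi> i j. if i = j then (if i = t then -1 else 1) else 0) :: real^'n^'n"
  have "det ?D = (\<Prod>i\<in>UNIV. ?D $ i $ i)"
    by (rule det_diagonal) simp
  also have "\<dots> \<noteq> 0" by (simp add: prod_zero_iff)
  finally have "det ?D \<noteq> 0" .
  hence "det (transpose C) * det A * det C \<noteq> 0" using C(2) by (metis det_mul)
  thus ?thesis by (simp add: invertible_det_nz)
qed

lemma matrix_inv_mult:
  fixes A :: "real^'n^'n"
  assumes "invertible A"
  shows "A ** matrix_inv A = mat 1" "matrix_inv A ** A = mat 1"
  using someI_ex[OF assms[unfolded invertible_def]] unfolding matrix_inv_def by auto

lemma matrix_inv_symmetric:
  fixes A :: "real^'n^'n"
  assumes "invertible A" "transpose A = A"
  shows "transpose (matrix_inv A) = matrix_inv A"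
proof -
  let ?B = "matrix_inv A"
  have "transpose ?B ** A = mat 1"
    by (metis assms(2) matrix_inv_mult(1)[OF assms(1)] matrix_transpose_mul transpose_mat)
  then have "transpose ?B = transpose ?B ** (A ** ?B)"
    using matrix_inv_mult(1)[OF assms(1)] by (simp add: matrix_mul_rid)
  also have "\<dots> = ?B" using \<open>transpose ?B ** A = mat 1\<close>
    by (simp add: matrix_mul_assoc matrix_mul_lid)
  finally show ?thesis .
qed

lemma matrix_inv_sum_right:
  fixes A :: "real^'n^'n"
  assumes "invertible A"
  shows "(\<Sum>k\<in>UNIV. A $ i $ k * matrix_inv A $ k $ j) = (if i = j then 1 else 0)"
proof -
  have "(A ** matrix_inv A) $ i $ j = (mat 1 :: real^'n^'n) $ i $ j" using matrix_inv_mult(1)[OF assms] by simp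
  thus ?thesis by (simp add: matrix_matrix_mult_def mat_def)
qed

lemma matrix_inv_sum_left:
  fixes A :: "real^'n^'n"
  assumes "invertible A"
  shows "(\<Sum>k\<in>UNIV. matrix_inv A $ i $ k * A $ k $ j) = (if i = j then 1 else 0)"
proof -
  have "(matrix_inv A ** A) $ i $ j = (mat 1 :: real^'n^'n) $ i $ j" using matrix_inv_mult(2)[OF assms] by simp
  thus ?thesis by (simp add: matrix_matrix_mult_def mat_def)
qed

lemma matrix_inv_entry:
  fixes A :: "real^'n^'n"
  assumes "invertible A"
  shows "matrix_inv A $ k $ j =
     det (\<chi> a c. if c = k then (if a = j then 1 else 0) else A $ a $ c) / det A"
proof -
  let ?b = "(\<chi> a. if a = j then 1 else 0) :: real^'n"
  let ?x = "(\<chi> c. matrix_inv A $ c $ j) :: real^'n"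
  have d0: "det A \<noteq> 0" using assms by (simp add: invertible_det_nz)
  have "A *v ?x = ?b"
    using matrix_inv_sum_right[OF assms] by (simp add: matrix_vector_mult_def vec_eq_iff)
  hence "?x = (\<chi> k. det(\<chi> i c. if c=k then ?b$i else A$i$c) / det A)"
    using cramer[OF d0] by blast
  hence "?x $ k = det(\<chi> i c. if c=k then ?b$i else A$i$c) / det A" by simp
  moreover have "(\<chi> i c. if c=k then ?b$i else A$i$c) = (\<chi> a c. if c = k then (if a = j then 1 else 0) else A $ a $ c)"
    by (simp add: vec_eq_iff)
  ultimately show ?thesis by simp
qed

lemma differentiable_det:
  fixes M :: "real^'m \<Rightarrow> real^'n^'n"
  assumes "\<And>a c. (\<lambda>y. M y $ a $ c) differentiable (at x)"
  shows "(\<lambda>y. det (M y)) differentiable (at x)"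
proof -
  have P: "(\<lambda>y. \<Prod>i\<in>UNIV. M y $ i $ p i) differentiable (at x)" for p :: "'n \<Rightarrow> 'n"
  proof -
    have "\<And>i. ((\<lambda>y. M y $ i $ p i) has_derivative frechet_derivative (\<lambda>y. M y $ i $ p i) (at x)) (at x)"
      using assms frechet_derivative_works by blast
    from has_derivative_prod[of UNIV "\<lambda>i y. M y $ i $ p i", OF this] show ?thesis unfolding differentiable_def by blast
  qed
  show ?thesis unfolding det_def
    by (rule differentiable_sum) (auto intro!: differentiable_mult P simp: finite_permutations)
qed

text \<open>By Cramer's rule the entries of \<open>G\<^sup>-\<^sup>1\<close> are quotients of determinants, hence
differentiable wherever those of \<open>G\<close> are.\<close>

lemma differentiable_ginv_open:
  assumes U: "open U" "x \<in> U" and inv: "\<And>y. y \<in> U \<Longrightarrow> invertible (G y)"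
    and G_diff: "\<And>a c. (\<lambda>y. G y $ a $ c) differentiable (at x)"
  shows "(\<lambda>y. ginv G y $ k $ j) differentiable (at x)"
proof -
  let ?M = "\<lambda>y. \<chi> a c. if c = k then (if a = j then 1 else 0) else G y $ a $ c"
  have "(\<lambda>y. det (?M y)) differentiable (at x)"
  proof (rule differentiable_det)
    show "(\<lambda>y. ?M y $ a $ c) differentiable (at x)" for a c
      by (cases "c = k") (simp_all add: G_diff)
  qed
  moreover have "(\<lambda>y. det (G y)) differentiable (at x)"
    by (rule differentiable_det) (simp add: G_diff)
  moreover have "det (G x) \<noteq> 0" using inv[OF U(2)] by (simp add: invertible_det_nz)
  ultimately have "(\<lambda>y. det (?M y) / det (G y)) differentiable (at x)"
    by (intro differentiable_divide) auto
  moreover have "\<And>y. y \<in> U \<Longrightarrow> det (?M y) / det (G y) = ginv G y $ k $ j"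
    unfolding ginv_def using matrix_inv_entry[OF inv] by simp
  ultimately show ?thesis by (rule differentiable_cong_open[OF U, rotated]) auto
qed

lemma sum_swap3: "(\<Sum>k\<in>A. \<Sum>m\<in>B. \<Sum>n\<in>C. f k m n) = (\<Sum>m\<in>B. \<Sum>n\<in>C. \<Sum>k\<in>A. f k m n)"
  by (subst sum.swap) (rule sum.cong, simp, rule sum.swap)

lemma sum_delta_mult: "(\<Sum>l\<in>(UNIV::'n::finite set). (if m = l then 1 else 0) * f l) = (f m :: real)"
proof -
  have "(\<Sum>l\<in>(UNIV::'n set). (if m = l then 1 else 0) * f l) = (\<Sum>l\<in>UNIV. if m = l then f l else 0)"
    by (rule sum.cong) auto
  thus ?thesis by simp
qed

lemma sum_symmetric_contract:
  fixes T c :: "'n::finite \<Rightarrow> 'n \<Rightarrow> real"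
  assumes "\<And>m l. T m l = T l m"
  shows "(\<Sum>m\<in>UNIV. \<Sum>l\<in>UNIV. T m l * c m l) = (\<Sum>m\<in>UNIV. \<Sum>l\<in>UNIV. T m l * (c m l + c l m)) / 2"
proof -
  have "(\<Sum>m\<in>UNIV. \<Sum>l\<in>UNIV. T m l * c l m) = (\<Sum>l\<in>UNIV. \<Sum>m\<in>UNIV. T m l * c l m)"
    by (rule sum.swap)
  also have "\<dots> = (\<Sum>m\<in>UNIV. \<Sum>l\<in>UNIV. T m l * c m l)" using assms by simp
  finally have "(\<Sum>m\<in>UNIV. \<Sum>l\<in>UNIV. T m l * c l m) = (\<Sum>m\<in>UNIV. \<Sum>l\<in>UNIV. T m l * c m l)" .
  thus ?thesis by (simp add: distrib_left sum.distrib)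
qed

lemma antisymmetric_quadratic_zero:
  fixes w :: "'n::finite \<Rightarrow> 'n \<Rightarrow> real"
  assumes "\<And>i j. w i j = - w j i"
  shows "(\<Sum>i\<in>UNIV. \<Sum>j\<in>UNIV. w i j * a i * a j) = 0"
proof -
  have "(\<Sum>i\<in>UNIV. \<Sum>j\<in>UNIV. w i j * a i * a j) = (\<Sum>j\<in>UNIV. \<Sum>i\<in>UNIV. w i j * a i * a j)"
    by (rule sum.swap)
  also have "\<dots> = (\<Sum>j\<in>UNIV. \<Sum>i\<in>UNIV. - (w j i * a j * a i))"
    by (intro sum.cong refl) (subst assms, simp add: algebra_simps)
  also have "\<dots> = - (\<Sum>i\<in>UNIV. \<Sum>j\<in>UNIV. w i j * a i * a j)"
    by (simp add: sum_negf)
  finally show ?thesis by simp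
qed

lemma shear_decomposition_quadratic:
  fixes B g \<sigma> \<omega> :: "'n::finite \<Rightarrow> 'n \<Rightarrow> real" and e w a :: "'n \<Rightarrow> real"
  assumes decomp: "\<And>i j. B i j - e i * w j = c * (g i j - e i * e j) + \<sigma> i j + \<omega> i j"
    and orth: "(\<Sum>i\<in>UNIV. e i * a i) = 0"
    and unit: "(\<Sum>i\<in>UNIV. \<Sum>j\<in>UNIV. g i j * a i * a j) = -1"
    and anti: "\<And>i j. \<omega> i j = - \<omega> j i"
  shows "(\<Sum>i\<in>UNIV. \<Sum>j\<in>UNIV. \<sigma> i j * a i * a j) = (\<Sum>i\<in>UNIV. \<Sum>j\<in>UNIV. B i j * a i * a j) + c"
proof -
  have "\<sigma> i j * a i * a j = B i j * a i * a j - (e i * a i) * (w j * a j) - c * (g i j * a i * a j)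
      + c * ((e i * a i) * (e j * a j)) - \<omega> i j * a i * a j" for i j
  proof -
    have \<sigma>_eq: "\<sigma> i j = B i j - e i * w j - c * (g i j - e i * e j) - \<omega> i j"
      using decomp[of i j] by simp
    show ?thesis unfolding \<sigma>_eq by (simp add: algebra_simps)
  qed
  then have "(\<Sum>i\<in>UNIV. \<Sum>j\<in>UNIV. \<sigma> i j * a i * a j) = (\<Sum>i\<in>UNIV. \<Sum>j\<in>UNIV. B i j * a i * a j)
      - (\<Sum>i\<in>UNIV. \<Sum>j\<in>UNIV. (e i * a i) * (w j * a j)) - c * (\<Sum>i\<in>UNIV. \<Sum>j\<in>UNIV. g i j * a i * a j)
      + c * (\<Sum>i\<in>UNIV. \<Sum>j\<in>UNIV. (e i * a i) * (e j * a j)) - (\<Sum>i\<in>UNIV. \<Sum>j\<in>UNIV. \<omega> i j * a i * a j)"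
    by (simp add: sum.distrib sum_subtractf sum_distrib_left)
  moreover have "(\<Sum>i\<in>UNIV. \<Sum>j\<in>UNIV. (e i * a i) * (w j * a j)) = 0"
    "(\<Sum>i\<in>UNIV. \<Sum>j\<in>UNIV. (e i * a i) * (e j * a j)) = 0"
    using orth by (simp_all add: sum_product[symmetric])
  moreover have "(\<Sum>i\<in>UNIV. \<Sum>j\<in>UNIV. \<omega> i j * a i * a j) = 0"
    using anti by (rule antisymmetric_quadratic_zero)
  ultimately show ?thesis using unit by simp
qed

lemma gdot_scaleL: "gdot G x (a *\<^sub>R X) Y = a * gdot G x X Y"
  unfolding gdot_def by (simp add: sum_distrib_left algebra_simps)
lemma gdot_scaleR: "gdot G x X (a *\<^sub>R Y) = a * gdot G x X Y"
  unfolding gdot_def by (simp add: sum_distrib_left algebra_simps)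
lemma gdot_addL: "gdot G x (X + Z) Y = gdot G x X Y + gdot G x Z Y"
  unfolding gdot_def by (simp add: sum.distrib algebra_simps)
lemma gdot_symm: assumes "\<And>i j. G x $ i $ j = G x $ j $ i" shows "gdot G x X Y = gdot G x Y X"
  unfolding gdot_def by (subst sum.swap) (simp add: assms algebra_simps)

lemma div_vec_scaleR:
  assumes fd: "f differentiable (at x)" and Xd: "\<And>l. (\<lambda>y. X y $ l) differentiable (at x)"
  shows "div_vec G (\<lambda>y. f y *\<^sub>R X y) x = lie_fun X f x + f x * div_vec G X x"
proof -
  have "pd (\<lambda>y. (f y *\<^sub>R X y) $ m) m x = pd f m x * X x $ m + f x * pd (\<lambda>y. X y $ m) m x" for m
    using pd_mult[OF fd Xd, of m] by simp
  thus ?thesis unfolding div_vec_def cd_vec_def lie_fun_def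
    by (simp add: sum.distrib sum_distrib_left algebra_simps)
qed

lemma div_vec_add:
  assumes Ad: "\<And>l. (\<lambda>y. A y $ l) differentiable (at x)" and Bd: "\<And>l. (\<lambda>y. B y $ l) differentiable (at x)"
  shows "div_vec G (\<lambda>y. A y + B y) x = div_vec G A x + div_vec G B x"
proof -
  have "pd (\<lambda>y. (A y + B y) $ m) m x = pd (\<lambda>y. A y $ m) m x + pd (\<lambda>y. B y $ m) m x" for m
    using pd_add[OF Ad Bd, of m] by simp
  thus ?thesis unfolding div_vec_def cd_vec_def
    by (simp add: sum.distrib algebra_simps)
qed

lemma div_vec_cong_open:
  assumes "open V" "x \<in> V" "\<And>y. y \<in> V \<Longrightarrow> X y = Y y"
  shows "div_vec G X x = div_vec G Y x"
proof -
  have "pd (\<lambda>y. X y $ m) m x = pd (\<lambda>y. Y y $ m) m x" for m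
    by (rule pd_cong_open[OF assms(1,2)]) (simp add: assms(3))
  moreover have "X x = Y x" using assms by blast
  ultimately show ?thesis unfolding div_vec_def cd_vec_def by simp
qed

section \<open>Christoffel symbols and Killing forms at a point\<close>

locale metric_point =
  fixes G :: "real^'n \<Rightarrow> real^'n^'n" and x :: "real^'n"
  assumes G_differentiable: "\<And>i j. (\<lambda>y. G y $ i $ j) differentiable (at x)"
    and G_sym: "\<And>i j. G x $ i $ j = G x $ j $ i"
    and G_invertible: "invertible (G x)"
    and pd_G_sym: "\<And>k i j. pd (\<lambda>y. G y $ i $ j) k x = pd (\<lambda>y. G y $ j $ i) k x"
begin

abbreviation "g i j \<equiv> G x $ i $ j"
abbreviation "gi i j \<equiv> ginv G x $ i $ j"
abbreviation "dg k i j \<equiv> pd (\<lambda>y. G y $ i $ j) k x"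

lemma ginv_right: "(\<Sum>l\<in>UNIV. g i l * gi l j) = (if i = j then 1 else 0)"
  using matrix_inv_sum_right[OF G_invertible] unfolding ginv_def .
lemma ginv_left: "(\<Sum>l\<in>UNIV. gi i l * g l j) = (if i = j then 1 else 0)"
  using matrix_inv_sum_left[OF G_invertible] unfolding ginv_def .
lemma ginv_sym: "gi i j = gi j i"
proof -
  have "transpose (matrix_inv (G x)) = matrix_inv (G x)"
    by (rule matrix_inv_symmetric[OF G_invertible]) (simp add: vec_eq_iff transpose_def G_sym)
  hence "transpose (matrix_inv (G x)) $ i $ j = matrix_inv (G x) $ i $ j" by simp
  thus ?thesis unfolding ginv_def transpose_def by simp
qed

lemma christoffel_lowered: "(\<Sum>l\<in>UNIV. g k l * christoffel G l m n x) = (dg m k n + dg n k m - dg k m n) / 2"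
proof -
  have "(\<Sum>l\<in>UNIV. g k l * christoffel G l m n x)
     = (\<Sum>l\<in>UNIV. \<Sum>j\<in>UNIV. (1/2) * (g k l * gi l j) * (dg m j n + dg n j m - dg j m n))"
    unfolding christoffel_def by (simp add: sum_distrib_left mult.assoc)
  also have "\<dots> = (\<Sum>j\<in>UNIV. (1/2) * (\<Sum>l\<in>UNIV. g k l * gi l j) * (dg m j n + dg n j m - dg j m n))"
    by (subst sum.swap) (simp add: sum_distrib_right sum_distrib_left)
  also have "\<dots> = (\<Sum>j\<in>UNIV. if k = j then (1/2) * (dg m j n + dg n j m - dg j m n) else 0)"
    by (rule sum.cong) (auto simp: ginv_right)
  also have "\<dots> = (dg m k n + dg n k m - dg k m n) / 2"
    by simp
  finally show ?thesis .
qed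

lemma christoffel_trace: "(\<Sum>m\<in>UNIV. christoffel G m m l x) = (\<Sum>m\<in>UNIV. \<Sum>k\<in>UNIV. gi m k * dg l m k) / 2"
proof -
  have "(\<Sum>m\<in>UNIV. christoffel G m m l x) = (1/2) * ((\<Sum>m\<in>UNIV. \<Sum>k\<in>UNIV. gi m k * dg m k l)
      + (\<Sum>m\<in>UNIV. \<Sum>k\<in>UNIV. gi m k * dg l k m) - (\<Sum>m\<in>UNIV. \<Sum>k\<in>UNIV. gi m k * dg k m l))"
    unfolding christoffel_def by (simp add: sum_distrib_left sum_subtractf sum.distrib algebra_simps)
  moreover have "(\<Sum>m\<in>UNIV. \<Sum>k\<in>UNIV. gi m k * dg k m l) = (\<Sum>m\<in>UNIV. \<Sum>k\<in>UNIV. gi m k * dg m k l)"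
    by (subst sum.swap) (simp add: ginv_sym)
  ultimately show ?thesis by (simp add: pd_G_sym)
qed

definition killing_form :: "(real^'n \<Rightarrow> real^'n) \<Rightarrow> 'n \<Rightarrow> 'n \<Rightarrow> real" where
  "killing_form X m n = (\<Sum>l\<in>UNIV. X x $ l * dg l m n + g l n * pd (\<lambda>y. X y $ l) m x
       + g m l * pd (\<lambda>y. X y $ l) n x)"

definition deriv_along :: "(real^'n \<Rightarrow> real^'n) \<Rightarrow> (real^'n \<Rightarrow> real^'n) \<Rightarrow> 'n \<Rightarrow> real" where
  "deriv_along A X m = (\<Sum>k\<in>UNIV. X x $ k * pd (\<lambda>y. A y $ m) k x)"

lemma pd_lower:
  assumes Xd: "\<And>l. (\<lambda>y. X y $ l) differentiable (at x)"
  shows "pd (\<lambda>y. lower G X y $ n) m x = (\<Sum>l\<in>UNIV. dg m n l * X x $ l + g n l * pd (\<lambda>y. X y $ l) m x)"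
proof -
  have "pd (\<lambda>y. lower G X y $ n) m x = pd (\<lambda>y. \<Sum>l\<in>UNIV. G y $ n $ l * X y $ l) m x"
    unfolding lower_def by simp
  also have "\<dots> = (\<Sum>l\<in>UNIV. pd (\<lambda>y. G y $ n $ l * X y $ l) m x)"
    by (rule pd_sum) (auto intro!: differentiable_mult G_differentiable Xd)
  also have "\<dots> = (\<Sum>l\<in>UNIV. dg m n l * X x $ l + g n l * pd (\<lambda>y. X y $ l) m x)"
    by (rule sum.cong) (auto simp: pd_mult G_differentiable Xd)
  finally show ?thesis .
qed

lemma differentiable_lower:
  assumes Xd: "\<And>l. (\<lambda>y. X y $ l) differentiable (at x)"
  shows "(\<lambda>y. lower G X y $ n) differentiable (at x)"
  unfolding lower_def by (auto intro!: differentiable_sum differentiable_mult G_differentiable Xd)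

lemma cd_covec_lower:
  assumes Xd: "\<And>l. (\<lambda>y. X y $ l) differentiable (at x)"
  shows "cd_covec G (lower G X) m n x = (\<Sum>l\<in>UNIV. dg m n l * X x $ l + g n l * pd (\<lambda>y. X y $ l) m x)
      - (\<Sum>j\<in>UNIV. X x $ j * (dg m j n + dg n j m - dg j m n) / 2)"
proof -
  have "(\<Sum>l\<in>UNIV. christoffel G l m n x * lower G X x $ l)
      = (\<Sum>l\<in>UNIV. \<Sum>j\<in>UNIV. christoffel G l m n x * (g l j * X x $ j))"
    unfolding lower_def by (simp add: sum_distrib_left)
  also have "\<dots> = (\<Sum>j\<in>UNIV. X x $ j * (\<Sum>l\<in>UNIV. g j l * christoffel G l m n x))"
    by (subst sum.swap) (simp add: sum_distrib_left G_sym algebra_simps)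
  also have "\<dots> = (\<Sum>j\<in>UNIV. X x $ j * (dg m j n + dg n j m - dg j m n) / 2)"
    by (simp add: christoffel_lowered)
  finally show ?thesis unfolding cd_covec_def pd_lower[OF Xd] by simp
qed

lemma cd_covec_lower_symmetrized:
  assumes Xd: "\<And>l. (\<lambda>y. X y $ l) differentiable (at x)"
  shows "cd_covec G (lower G X) m n x + cd_covec G (lower G X) n m x = killing_form X m n"
  unfolding cd_covec_lower[OF Xd] killing_form_def
  by (simp add: sum.distrib sum_subtractf algebra_simps sum_divide_distrib[symmetric] pd_G_sym G_sym)

lemma pd_gdot:
  assumes Ad: "\<And>l. (\<lambda>y. A y $ l) differentiable (at x)"
    and Bd: "\<And>l. (\<lambda>y. B y $ l) differentiable (at x)"
  shows "pd (\<lambda>y. gdot G y (A y) (B y)) k x = (\<Sum>m\<in>UNIV. \<Sum>n\<in>UNIV. dg k m n * A x $ m * B x $ n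
     + g m n * pd (\<lambda>y. A y $ m) k x * B x $ n + g m n * A x $ m * pd (\<lambda>y. B y $ n) k x)"
proof -
  have "pd (\<lambda>y. gdot G y (A y) (B y)) k x = (\<Sum>m\<in>UNIV. pd (\<lambda>y. \<Sum>n\<in>UNIV. G y $ m $ n * A y $ m * B y $ n) k x)"
    unfolding gdot_def
    by (rule pd_sum) (auto intro!: differentiable_sum differentiable_mult G_differentiable Ad Bd)
  also have "\<dots> = (\<Sum>m\<in>UNIV. \<Sum>n\<in>UNIV. pd (\<lambda>y. G y $ m $ n * A y $ m * B y $ n) k x)"
    by (rule sum.cong, simp, rule pd_sum) (auto intro!: differentiable_sum differentiable_mult G_differentiable Ad Bd)
  also have "\<dots> = (\<Sum>m\<in>UNIV. \<Sum>n\<in>UNIV. dg k m n * A x $ m * B x $ n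
     + g m n * pd (\<lambda>y. A y $ m) k x * B x $ n + g m n * A x $ m * pd (\<lambda>y. B y $ n) k x)"
    by (intro sum.cong refl) (simp add: pd_mult G_differentiable Ad Bd differentiable_mult algebra_simps)
  finally show ?thesis .
qed

lemma lie_fun_gdot:
  assumes Ad: "\<And>l. (\<lambda>y. A y $ l) differentiable (at x)"
    and Bd: "\<And>l. (\<lambda>y. B y $ l) differentiable (at x)"
  shows "lie_fun X (\<lambda>y. gdot G y (A y) (B y)) x =
     (\<Sum>m\<in>UNIV. \<Sum>n\<in>UNIV. (\<Sum>l\<in>UNIV. X x $ l * dg l m n) * A x $ m * B x $ n)
   + (\<Sum>m\<in>UNIV. \<Sum>n\<in>UNIV. g m n * deriv_along A X m * B x $ n)
   + (\<Sum>m\<in>UNIV. \<Sum>n\<in>UNIV. g m n * A x $ m * deriv_along B X n)"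
proof -
  have "lie_fun X (\<lambda>y. gdot G y (A y) (B y)) x = (\<Sum>l\<in>UNIV. \<Sum>m\<in>UNIV. \<Sum>n\<in>UNIV.
     X x $ l * dg l m n * A x $ m * B x $ n
     + g m n * (X x $ l * pd (\<lambda>y. A y $ m) l x) * B x $ n + g m n * A x $ m * (X x $ l * pd (\<lambda>y. B y $ n) l x))"
    unfolding lie_fun_def pd_gdot[OF Ad Bd] by (simp add: sum_distrib_left algebra_simps)
  also have "\<dots> = (\<Sum>m\<in>UNIV. \<Sum>n\<in>UNIV. \<Sum>l\<in>UNIV.
     X x $ l * dg l m n * A x $ m * B x $ n
     + g m n * (X x $ l * pd (\<lambda>y. A y $ m) l x) * B x $ n + g m n * A x $ m * (X x $ l * pd (\<lambda>y. B y $ n) l x))"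
    by (rule sum_swap3)
  also have "\<dots> = (\<Sum>m\<in>UNIV. \<Sum>n\<in>UNIV. (\<Sum>l\<in>UNIV. X x $ l * dg l m n) * A x $ m * B x $ n)
   + (\<Sum>m\<in>UNIV. \<Sum>n\<in>UNIV. g m n * deriv_along A X m * B x $ n)
   + (\<Sum>m\<in>UNIV. \<Sum>n\<in>UNIV. g m n * A x $ m * deriv_along B X n)"
    unfolding deriv_along_def by (simp add: sum.distrib sum_distrib_left sum_distrib_right)
  finally show ?thesis .
qed

lemma killing_form_contract:
  "(\<Sum>m\<in>UNIV. \<Sum>n\<in>UNIV. A x $ m * B x $ n * killing_form X m n) =
     (\<Sum>m\<in>UNIV. \<Sum>n\<in>UNIV. (\<Sum>l\<in>UNIV. X x $ l * dg l m n) * A x $ m * B x $ n)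
   + (\<Sum>m\<in>UNIV. \<Sum>n\<in>UNIV. g m n * deriv_along X A m * B x $ n)
   + (\<Sum>m\<in>UNIV. \<Sum>n\<in>UNIV. g m n * A x $ m * deriv_along X B n)"
proof -
  have expand: "(\<Sum>m\<in>UNIV. \<Sum>n\<in>UNIV. A x $ m * B x $ n * killing_form X m n) =
     (\<Sum>m\<in>UNIV. \<Sum>n\<in>UNIV. (\<Sum>l\<in>UNIV. X x $ l * dg l m n) * A x $ m * B x $ n)
   + (\<Sum>m\<in>UNIV. \<Sum>n\<in>UNIV. \<Sum>l\<in>UNIV. A x $ m * B x $ n * (g l n * pd (\<lambda>y. X y $ l) m x))
   + (\<Sum>m\<in>UNIV. \<Sum>n\<in>UNIV. \<Sum>l\<in>UNIV. A x $ m * B x $ n * (g m l * pd (\<lambda>y. X y $ l) n x))"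
    unfolding killing_form_def by (simp add: sum.distrib sum_distrib_left sum_distrib_right algebra_simps)
  have second: "(\<Sum>m\<in>UNIV. \<Sum>n\<in>UNIV. \<Sum>l\<in>UNIV. A x $ m * B x $ n * (g l n * pd (\<lambda>y. X y $ l) m x))
      = (\<Sum>m\<in>UNIV. \<Sum>n\<in>UNIV. g m n * deriv_along X A m * B x $ n)"
  proof -
    have "(\<Sum>m\<in>UNIV. \<Sum>n\<in>UNIV. \<Sum>l\<in>UNIV. A x $ m * B x $ n * (g l n * pd (\<lambda>y. X y $ l) m x))
       = (\<Sum>n\<in>UNIV. \<Sum>l\<in>UNIV. \<Sum>m\<in>UNIV. A x $ m * B x $ n * (g l n * pd (\<lambda>y. X y $ l) m x))"
      by (rule sum_swap3)
    also have "\<dots> = (\<Sum>l\<in>UNIV. \<Sum>n\<in>UNIV. \<Sum>m\<in>UNIV. A x $ m * B x $ n * (g l n * pd (\<lambda>y. X y $ l) m x))"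
      by (rule sum.swap)
    also have "\<dots> = (\<Sum>m\<in>UNIV. \<Sum>n\<in>UNIV. g m n * deriv_along X A m * B x $ n)"
      unfolding deriv_along_def by (simp add: sum_distrib_left sum_distrib_right algebra_simps)
    finally show ?thesis .
  qed
  have third: "(\<Sum>m\<in>UNIV. \<Sum>n\<in>UNIV. \<Sum>l\<in>UNIV. A x $ m * B x $ n * (g m l * pd (\<lambda>y. X y $ l) n x))
      = (\<Sum>m\<in>UNIV. \<Sum>n\<in>UNIV. g m n * A x $ m * deriv_along X B n)"
  proof -
    have "(\<Sum>m\<in>UNIV. \<Sum>n\<in>UNIV. \<Sum>l\<in>UNIV. A x $ m * B x $ n * (g m l * pd (\<lambda>y. X y $ l) n x))
       = (\<Sum>m\<in>UNIV. \<Sum>l\<in>UNIV. \<Sum>n\<in>UNIV. A x $ m * B x $ n * (g m l * pd (\<lambda>y. X y $ l) n x))"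
      by (rule sum.cong, simp, rule sum.swap)
    also have "\<dots> = (\<Sum>m\<in>UNIV. \<Sum>n\<in>UNIV. g m n * A x $ m * deriv_along X B n)"
      unfolding deriv_along_def by (simp add: sum_distrib_left sum_distrib_right algebra_simps)
    finally show ?thesis .
  qed
  show ?thesis using expand second third by simp
qed

lemma div_vec_expand:
  "div_vec G X x = (\<Sum>m\<in>UNIV. pd (\<lambda>y. X y $ m) m x)
     + (\<Sum>l\<in>UNIV. X x $ l * (\<Sum>m\<in>UNIV. \<Sum>k\<in>UNIV. gi m k * dg l m k)) / 2"
proof -
  have "div_vec G X x = (\<Sum>m\<in>UNIV. pd (\<lambda>y. X y $ m) m x)
     + (\<Sum>l\<in>UNIV. X x $ l * (\<Sum>m\<in>UNIV. christoffel G m m l x))"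
  proof -
    have "(\<Sum>m\<in>UNIV. \<Sum>l\<in>UNIV. christoffel G m m l x * X x $ l) = (\<Sum>l\<in>UNIV. \<Sum>m\<in>UNIV. christoffel G m m l x * X x $ l)"
      by (rule sum.swap)
    thus ?thesis unfolding div_vec_def cd_vec_def
      by (simp add: sum.distrib sum_distrib_left sum_distrib_right algebra_simps)
  qed
  moreover have "(\<Sum>l\<in>UNIV. X x $ l * (\<Sum>m\<in>UNIV. christoffel G m m l x))
     = (\<Sum>l\<in>UNIV. X x $ l * (\<Sum>m\<in>UNIV. \<Sum>k\<in>UNIV. gi m k * dg l m k)) / 2"
    unfolding sum_divide_distrib[of "\<lambda>l. X x $ l * (\<Sum>m\<in>UNIV. \<Sum>k\<in>UNIV. gi m k * dg l m k)"]
    by (simp only: christoffel_trace times_divide_eq_right)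
  ultimately show ?thesis by simp
qed

lemma killing_form_trace:
  "(\<Sum>m\<in>UNIV. \<Sum>n\<in>UNIV. gi m n * killing_form X m n) = 2 * div_vec G X x"
proof -
  have expand: "(\<Sum>m\<in>UNIV. \<Sum>n\<in>UNIV. gi m n * killing_form X m n) =
      (\<Sum>l\<in>UNIV. X x $ l * (\<Sum>m\<in>UNIV. \<Sum>k\<in>UNIV. gi m k * dg l m k))
    + (\<Sum>m\<in>UNIV. \<Sum>n\<in>UNIV. \<Sum>l\<in>UNIV. gi m n * (g l n * pd (\<lambda>y. X y $ l) m x))
    + (\<Sum>m\<in>UNIV. \<Sum>n\<in>UNIV. \<Sum>l\<in>UNIV. gi m n * (g m l * pd (\<lambda>y. X y $ l) n x))"
  proof -
    have "(\<Sum>m\<in>UNIV. \<Sum>n\<in>UNIV. \<Sum>l\<in>UNIV. gi m n * (X x $ l * dg l m n)) = (\<Sum>l\<in>UNIV. \<Sum>m\<in>UNIV. \<Sum>n\<in>UNIV. gi m n * (X x $ l * dg l m n))"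
      by (rule sum_swap3[symmetric])
    thus ?thesis unfolding killing_form_def by (simp add: sum.distrib sum_distrib_left sum_distrib_right algebra_simps)
  qed
  have second: "(\<Sum>m\<in>UNIV. \<Sum>n\<in>UNIV. \<Sum>l\<in>UNIV. gi m n * (g l n * pd (\<lambda>y. X y $ l) m x))
     = (\<Sum>m\<in>UNIV. pd (\<lambda>y. X y $ m) m x)"
  proof -
    have "(\<Sum>m\<in>UNIV. \<Sum>n\<in>UNIV. \<Sum>l\<in>UNIV. gi m n * (g l n * pd (\<lambda>y. X y $ l) m x))
       = (\<Sum>m\<in>UNIV. \<Sum>l\<in>UNIV. (\<Sum>n\<in>UNIV. gi m n * g n l) * pd (\<lambda>y. X y $ l) m x)"
      by (rule sum.cong, simp, subst sum.swap) (simp add: sum_distrib_right sum_distrib_left G_sym algebra_simps)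
    also have "\<dots> = (\<Sum>m\<in>UNIV. pd (\<lambda>y. X y $ m) m x)"
      by (simp add: ginv_left sum_delta_mult)
    finally show ?thesis .
  qed
  have third: "(\<Sum>m\<in>UNIV. \<Sum>n\<in>UNIV. \<Sum>l\<in>UNIV. gi m n * (g m l * pd (\<lambda>y. X y $ l) n x))
     = (\<Sum>m\<in>UNIV. pd (\<lambda>y. X y $ m) m x)"
  proof -
    have "(\<Sum>m\<in>UNIV. \<Sum>n\<in>UNIV. \<Sum>l\<in>UNIV. gi m n * (g m l * pd (\<lambda>y. X y $ l) n x))
       = (\<Sum>n\<in>UNIV. \<Sum>l\<in>UNIV. \<Sum>m\<in>UNIV. gi m n * (g m l * pd (\<lambda>y. X y $ l) n x))"
      by (rule sum_swap3)
    also have "\<dots> = (\<Sum>n\<in>UNIV. \<Sum>l\<in>UNIV. (\<Sum>m\<in>UNIV. gi n m * g m l) * pd (\<lambda>y. X y $ l) n x)"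
      by (simp add: sum_distrib_right sum_distrib_left ginv_sym algebra_simps)
    also have "\<dots> = (\<Sum>n\<in>UNIV. pd (\<lambda>y. X y $ n) n x)"
      by (simp add: ginv_left sum_delta_mult)
    finally show ?thesis .
  qed
  show ?thesis using expand second third div_vec_expand[of X] by simp
qed

lemma ginv_lower: "(\<Sum>k\<in>UNIV. gi m k * lower G X x $ k) = X x $ m"
proof -
  have "(\<Sum>k\<in>UNIV. gi m k * lower G X x $ k) = (\<Sum>j\<in>UNIV. \<Sum>k\<in>UNIV. gi m k * g k j * X x $ j)"
    unfolding lower_def by (subst sum.swap) (simp add: sum_distrib_left algebra_simps)
  also have "\<dots> = (\<Sum>j\<in>UNIV. (\<Sum>k\<in>UNIV. gi m k * g k j) * X x $ j)"
    by (simp add: sum_distrib_right)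
  finally show ?thesis by (simp add: ginv_left sum_delta_mult)
qed

lemma div_vec_tensor_lower:
  assumes Td: "\<And>m k. (\<lambda>y. T y $ m $ k) differentiable (at x)"
    and Xd: "\<And>l. (\<lambda>y. X y $ l) differentiable (at x)"
  shows "div_vec G (\<lambda>y. \<chi> m. \<Sum>k\<in>UNIV. T y $ m $ k * lower G X y $ k) x
     = (\<Sum>m\<in>UNIV. \<Sum>k\<in>UNIV. pd (\<lambda>y. T y $ m $ k) m x * lower G X x $ k)
     + (\<Sum>m\<in>UNIV. \<Sum>k\<in>UNIV. T x $ m $ k * pd (\<lambda>y. lower G X y $ k) m x)
     + (\<Sum>m\<in>UNIV. \<Sum>l\<in>UNIV. christoffel G m m l x * (\<Sum>k\<in>UNIV. T x $ l $ k * lower G X x $ k))"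
proof -
  have "pd (\<lambda>y. (\<chi> m. \<Sum>k\<in>UNIV. T y $ m $ k * lower G X y $ k) $ m) m x
      = (\<Sum>k\<in>UNIV. pd (\<lambda>y. T y $ m $ k) m x * lower G X x $ k
          + T x $ m $ k * pd (\<lambda>y. lower G X y $ k) m x)" for m
    using Td differentiable_lower[OF Xd] by (simp add: pd_sum pd_mult differentiable_mult)
  then show ?thesis
    unfolding div_vec_def cd_vec_def by (simp add: sum.distrib)
qed

lemma lower_contract_div_tensor:
  assumes Td: "\<And>m k. (\<lambda>y. T y $ m $ k) differentiable (at x)"
    and Xd: "\<And>l. (\<lambda>y. X y $ l) differentiable (at x)"
  shows "(\<Sum>k\<in>UNIV. lower G X x $ k * div_tensor G T k x) =
     div_vec G (\<lambda>y. \<chi> m. \<Sum>k\<in>UNIV. T y $ m $ k * lower G X y $ k) x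
     - (\<Sum>m\<in>UNIV. \<Sum>l\<in>UNIV. T x $ m $ l * cd_covec G (lower G X) m l x)"
proof -
  define w where "w k = lower G X x $ k" for k
  have "(\<Sum>k\<in>UNIV. w k * (\<Sum>m\<in>UNIV. \<Sum>l\<in>UNIV. christoffel G m m l x * T x $ l $ k))
     = (\<Sum>m\<in>UNIV. \<Sum>l\<in>UNIV. \<Sum>k\<in>UNIV. christoffel G m m l x * (T x $ l $ k * w k))"
    by (subst sum_swap3[symmetric]) (simp add: sum_distrib_left algebra_simps)
  then have trace_term: "(\<Sum>k\<in>UNIV. w k * (\<Sum>m\<in>UNIV. \<Sum>l\<in>UNIV. christoffel G m m l x * T x $ l $ k))
     = (\<Sum>m\<in>UNIV. \<Sum>l\<in>UNIV. christoffel G m m l x * (\<Sum>k\<in>UNIV. T x $ l $ k * w k))"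
    by (simp add: sum_distrib_left)
  have "(\<Sum>k\<in>UNIV. w k * (\<Sum>m\<in>UNIV. \<Sum>l\<in>UNIV. christoffel G k m l x * T x $ m $ l))
     = (\<Sum>m\<in>UNIV. \<Sum>l\<in>UNIV. \<Sum>k\<in>UNIV. T x $ m $ l * (christoffel G k m l x * w k))"
    by (subst sum_swap3[symmetric]) (simp add: sum_distrib_left algebra_simps)
  then have connection_term: "(\<Sum>k\<in>UNIV. w k * (\<Sum>m\<in>UNIV. \<Sum>l\<in>UNIV. christoffel G k m l x * T x $ m $ l))
     = (\<Sum>m\<in>UNIV. \<Sum>l\<in>UNIV. T x $ m $ l * (\<Sum>k\<in>UNIV. christoffel G k m l x * w k))"
    by (simp add: sum_distrib_left)
  have partial_term: "(\<Sum>k\<in>UNIV. w k * (\<Sum>m\<in>UNIV. pd (\<lambda>y. T y $ m $ k) m x))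
     = (\<Sum>m\<in>UNIV. \<Sum>k\<in>UNIV. pd (\<lambda>y. T y $ m $ k) m x * w k)"
    by (subst sum.swap) (simp add: sum_distrib_left algebra_simps)
  have "(\<Sum>m\<in>UNIV. \<Sum>l\<in>UNIV. T x $ m $ l * cd_covec G (lower G X) m l x)
     = (\<Sum>m\<in>UNIV. \<Sum>l\<in>UNIV. T x $ m $ l * pd (\<lambda>y. lower G X y $ l) m x)
     - (\<Sum>m\<in>UNIV. \<Sum>l\<in>UNIV. T x $ m $ l * (\<Sum>k\<in>UNIV. christoffel G k m l x * w k))"
    unfolding cd_covec_def w_def by (simp add: sum_subtractf right_diff_distrib)
  moreover have "(\<Sum>k\<in>UNIV. lower G X x $ k * div_tensor G T k x) =
      (\<Sum>k\<in>UNIV. w k * (\<Sum>m\<in>UNIV. pd (\<lambda>y. T y $ m $ k) m x))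
    + (\<Sum>k\<in>UNIV. w k * (\<Sum>m\<in>UNIV. \<Sum>l\<in>UNIV. christoffel G m m l x * T x $ l $ k))
    + (\<Sum>k\<in>UNIV. w k * (\<Sum>m\<in>UNIV. \<Sum>l\<in>UNIV. christoffel G k m l x * T x $ m $ l))"
    unfolding div_tensor_def w_def by (simp add: sum.distrib algebra_simps)
  ultimately show ?thesis
    using trace_term connection_term partial_term unfolding w_def
    by (simp add: div_vec_tensor_lower[OF Td Xd])
qed

lemma cd_covec_lower_split:
  assumes Yd: "\<And>l. (\<lambda>y. Y y $ l) differentiable (at x)"
  shows "cd_covec G (lower G Y) i j x = (\<Sum>l\<in>UNIV. Y x $ l * (dg i l j - dg j l i)) / 2
     + (\<Sum>l\<in>UNIV. Y x $ l * dg l i j) / 2 + (\<Sum>l\<in>UNIV. g j l * pd (\<lambda>y. Y y $ l) i x)"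
proof -
  have "cd_covec G (lower G Y) i j x = (\<Sum>l\<in>UNIV. dg i l j * Y x $ l + g j l * pd (\<lambda>y. Y y $ l) i x
      - Y x $ l * (dg i l j + dg j l i - dg l i j) / 2)"
    unfolding cd_covec_lower[OF Yd] sum_subtractf by (simp add: pd_G_sym)
  also have "\<dots> = (\<Sum>l\<in>UNIV. Y x $ l * (dg i l j - dg j l i) / 2 + Y x $ l * dg l i j / 2
      + g j l * pd (\<lambda>y. Y y $ l) i x)"
    by (rule sum.cong) (simp_all add: field_simps)
  finally show ?thesis by (simp add: sum.distrib sum_divide_distrib)
qed

text \<open>Contracted with \<open>X\<^sup>iX\<^sup>j\<close>, the part of the Christoffel term antisymmetric in \<open>i, j\<close> drops out.\<close>

lemma cd_covec_lower_quadratic_expand: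
  assumes Yd: "\<And>l. (\<lambda>y. Y y $ l) differentiable (at x)"
  shows "(\<Sum>i\<in>UNIV. \<Sum>j\<in>UNIV. cd_covec G (lower G Y) i j x * X x $ i * X x $ j)
     = (\<Sum>m\<in>UNIV. \<Sum>n\<in>UNIV. (\<Sum>l\<in>UNIV. Y x $ l * dg l m n) * X x $ m * X x $ n) / 2
       + (\<Sum>m\<in>UNIV. \<Sum>n\<in>UNIV. g m n * deriv_along Y X m * X x $ n)"
proof -
  have anti: "(\<Sum>i\<in>UNIV. \<Sum>j\<in>UNIV. (\<Sum>l\<in>UNIV. Y x $ l * (dg i l j - dg j l i)) / 2 * X x $ i * X x $ j) = 0"
    by (rule antisymmetric_quadratic_zero) (simp add: right_diff_distrib sum_subtractf field_simps)
  have "(\<Sum>i\<in>UNIV. \<Sum>j\<in>UNIV. (\<Sum>l\<in>UNIV. Y x $ l * dg l i j) / 2 * X x $ i * X x $ j)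
      = (\<Sum>i\<in>UNIV. \<Sum>j\<in>UNIV. (\<Sum>l\<in>UNIV. Y x $ l * dg l i j) * X x $ i * X x $ j / 2)"
    by (intro sum.cong) auto
  also have "\<dots> = (\<Sum>m\<in>UNIV. \<Sum>n\<in>UNIV. (\<Sum>l\<in>UNIV. Y x $ l * dg l m n) * X x $ m * X x $ n) / 2"
    by (simp only: sum_divide_distrib)
  finally have sym: "(\<Sum>i\<in>UNIV. \<Sum>j\<in>UNIV. (\<Sum>l\<in>UNIV. Y x $ l * dg l i j) / 2 * X x $ i * X x $ j)
      = (\<Sum>m\<in>UNIV. \<Sum>n\<in>UNIV. (\<Sum>l\<in>UNIV. Y x $ l * dg l m n) * X x $ m * X x $ n) / 2" .
  have "(\<Sum>i\<in>UNIV. \<Sum>j\<in>UNIV. (\<Sum>l\<in>UNIV. g j l * pd (\<lambda>y. Y y $ l) i x) * X x $ i * X x $ j)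
      = (\<Sum>i\<in>UNIV. \<Sum>j\<in>UNIV. \<Sum>l\<in>UNIV. X x $ i * X x $ j * (g j l * pd (\<lambda>y. Y y $ l) i x))"
    by (simp add: sum_distrib_left sum_distrib_right algebra_simps)
  also have "\<dots> = (\<Sum>l\<in>UNIV. \<Sum>j\<in>UNIV. \<Sum>i\<in>UNIV. X x $ i * X x $ j * (g j l * pd (\<lambda>y. Y y $ l) i x))"
    by (subst sum_swap3) (rule sum.swap)
  also have "\<dots> = (\<Sum>m\<in>UNIV. \<Sum>n\<in>UNIV. g m n * deriv_along Y X m * X x $ n)"
    unfolding deriv_along_def by (simp add: sum_distrib_left sum_distrib_right G_sym algebra_simps)
  finally have transport: "(\<Sum>i\<in>UNIV. \<Sum>j\<in>UNIV. (\<Sum>l\<in>UNIV. g j l * pd (\<lambda>y. Y y $ l) i x) * X x $ i * X x $ j)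
      = (\<Sum>m\<in>UNIV. \<Sum>n\<in>UNIV. g m n * deriv_along Y X m * X x $ n)" .
  show ?thesis
    unfolding cd_covec_lower_split[OF Yd] distrib_right sum.distrib anti sym transport by simp
qed

text \<open>The Killing equation for \<open>X\<close> and the constancy of \<open>g(Y,X)\<close> along \<open>X\<close> together allow
\<open>g(Y(X), X)\<close> to be replaced by \<open>g(X(Y), X)\<close>, which leaves \<open>Y(g(X,X))/2\<close>.\<close>

lemma cd_covec_lower_quadratic:
  assumes Xd: "\<And>l. (\<lambda>y. X y $ l) differentiable (at x)"
    and Yd: "\<And>l. (\<lambda>y. Y y $ l) differentiable (at x)"
    and killing: "(\<Sum>m\<in>UNIV. \<Sum>n\<in>UNIV. Y x $ m * X x $ n * killing_form X m n) = 0"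
    and const: "lie_fun X (\<lambda>y. gdot G y (Y y) (X y)) x = 0"
  shows "(\<Sum>i\<in>UNIV. \<Sum>j\<in>UNIV. cd_covec G (lower G Y) i j x * X x $ i * X x $ j)
     = lie_fun Y (\<lambda>y. gdot G y (X y) (X y)) x / 2"
proof -
  define S where "S = (\<Sum>m\<in>UNIV. \<Sum>n\<in>UNIV. (\<Sum>l\<in>UNIV. X x $ l * dg l m n) * Y x $ m * X x $ n)"
  have "lie_fun X (\<lambda>y. gdot G y (Y y) (X y)) x = S
     + (\<Sum>m\<in>UNIV. \<Sum>n\<in>UNIV. g m n * deriv_along Y X m * X x $ n)
     + (\<Sum>m\<in>UNIV. \<Sum>n\<in>UNIV. g m n * Y x $ m * deriv_along X X n)"
    unfolding S_def by (rule lie_fun_gdot[OF Yd Xd])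
  moreover have "(\<Sum>m\<in>UNIV. \<Sum>n\<in>UNIV. Y x $ m * X x $ n * killing_form X m n) = S
     + (\<Sum>m\<in>UNIV. \<Sum>n\<in>UNIV. g m n * deriv_along X Y m * X x $ n)
     + (\<Sum>m\<in>UNIV. \<Sum>n\<in>UNIV. g m n * Y x $ m * deriv_along X X n)"
    unfolding S_def by (rule killing_form_contract)
  ultimately have swap: "(\<Sum>m\<in>UNIV. \<Sum>n\<in>UNIV. g m n * deriv_along Y X m * X x $ n)
      = (\<Sum>m\<in>UNIV. \<Sum>n\<in>UNIV. g m n * deriv_along X Y m * X x $ n)"
    using killing const by simp
  have sym: "(\<Sum>m\<in>UNIV. \<Sum>n\<in>UNIV. g m n * X x $ m * deriv_along X Y n)
      = (\<Sum>m\<in>UNIV. \<Sum>n\<in>UNIV. g m n * deriv_along X Y m * X x $ n)"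
    by (subst sum.swap) (simp add: G_sym algebra_simps)
  have "lie_fun Y (\<lambda>y. gdot G y (X y) (X y)) x
      = (\<Sum>m\<in>UNIV. \<Sum>n\<in>UNIV. (\<Sum>l\<in>UNIV. Y x $ l * dg l m n) * X x $ m * X x $ n)
     + (\<Sum>m\<in>UNIV. \<Sum>n\<in>UNIV. g m n * deriv_along X Y m * X x $ n)
     + (\<Sum>m\<in>UNIV. \<Sum>n\<in>UNIV. g m n * X x $ m * deriv_along X Y n)"
    by (rule lie_fun_gdot[OF Xd Xd])
  then show ?thesis unfolding cd_covec_lower_quadratic_expand[OF Yd] swap sym by simp
qed

end

section \<open>The radiation equation of state\<close>

lemma radiation_eos_ode:
  assumes eos: "radiation_eos d H" and d: "d > 0" and q: "q > 0" and r: "r > 0"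
  shows "H q r * deriv (\<lambda>q. eos_hP H q r) q = - d * (eos_hP H q r)\<^sup>2"
proof -
  define f where "f q = H q r" for q
  define f' where "f' q = eos_hP H q r" for q
  define f'' where "f'' q = deriv f' q" for q
  have E: "f q > 0" "f' q > 0" "f differentiable (at q)" "f' differentiable (at q)"
      "sound_speed_sq H q r = 1 / d"
    using eos q r unfolding radiation_eos_def f_def f'_def by blast+
  have Df: "DERIV f q :> f' q"
    using E(3) DERIV_deriv_iff_real_differentiable unfolding f'_def eos_hP_def f_def by blast
  have Df': "DERIV f' q :> f'' q"
    using E(4) DERIV_deriv_iff_real_differentiable unfolding f''_def by blast
  have "DERIV (\<lambda>q. ln (f q)) q :> 1 / f q * f' q"
    by (rule DERIV_chain2[OF DERIV_ln_divide[OF E(1)] Df])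
  then have ln_h: "deriv (\<lambda>q. ln (H q r)) q = f' q / f q"
    using DERIV_imp_deriv unfolding f_def by fastforce
  have inv: "DERIV (\<lambda>q. inverse (f' q)) q :> - (f'' q * inverse (f' q ^ 2))"
    using DERIV_inverse_fun[OF Df'] E(2) by (simp add: numeral_2_eq_2)
  have "DERIV (\<lambda>q. ln (inverse (f' q))) q :> 1 / inverse (f' q) * (- (f'' q * inverse (f' q ^ 2)))"
    by (rule DERIV_chain2[OF DERIV_ln_divide inv]) (use E(2) in simp)
  moreover have "(\<lambda>q. ln (eos_n H q r)) = (\<lambda>q. ln (inverse (f' q)))"
    unfolding eos_n_def f'_def by (simp add: inverse_eq_divide)
  ultimately have ln_n: "deriv (\<lambda>q. ln (eos_n H q r)) q = - f'' q / f' q"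
    using DERIV_imp_deriv E(2) by (fastforce simp: field_simps power2_eq_square)
  have ratio: "(f' q / f q) / (- f'' q / f' q) = 1 / d"
    using E(5) unfolding sound_speed_sq_def ln_h ln_n .
  then have "f'' q \<noteq> 0" using d by auto
  with ratio E(1,2) d have "f q * f'' q = - d * (f' q)\<^sup>2"
    by (simp add: field_simps power2_eq_square)
  then show ?thesis unfolding f_def f'_def f''_def .
qed

text \<open>By the previous lemma \<open>(\<partial>\<^sub>P h) h\<^sup>d\<close> does not depend on \<open>P\<close>, so \<open>h\<^sup>d\<^sup>+\<^sup>1\<close> is affine
in \<open>P\<close>; its slope is read off between \<open>P = 1\<close> and \<open>P = 2\<close>.\<close>

lemma radiation_eos_first_integral:
  assumes eos: "radiation_eos d H" and d: "d > 0" and P: "P > 0" and r: "r > 0"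
  shows "eos_hP H P r * H P r powr d = (H 2 r powr (d+1) - H 1 r powr (d+1)) / (d+1)"
proof -
  define f where "f q = H q r" for q
  define f' where "f' q = eos_hP H q r" for q
  have E: "f q > 0" "f' q > 0" "DERIV f q :> f' q" "DERIV f' q :> deriv f' q" if "q > 0" for q
    using eos r that DERIV_deriv_iff_real_differentiable
    unfolding radiation_eos_def f_def f'_def eos_hP_def by blast+
  define \<phi> where "\<phi> q = f' q * f q powr d" for q
  have "DERIV \<phi> q :> 0" if q: "q > 0" for q
  proof -
    have "DERIV \<phi> q :> deriv f' q * f q powr d + (d * f q powr (d - 1) * f' q) * f' q"
      unfolding \<phi>_def using DERIV_mult[OF E(4)[OF q] DERIV_fun_powr[OF E(3)[OF q] E(1)[OF q], of d]]
      by simp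
    moreover have "f q powr d = f q powr (d - 1) * f q" using E(1)[OF q] by (simp add: powr_diff)
    then have "deriv f' q * f q powr d + (d * f q powr (d - 1) * f' q) * f' q
        = f q powr (d - 1) * (f q * deriv f' q + d * (f' q)\<^sup>2)"
      by (simp add: algebra_simps power2_eq_square)
    moreover have "f q * deriv f' q + d * (f' q)\<^sup>2 = 0"
      using radiation_eos_ode[OF eos d q r] unfolding f_def[symmetric] f'_def[symmetric] by simp
    ultimately show ?thesis by simp
  qed
  then have \<phi>_const: "\<phi> q = \<phi> P" if "q > 0" for q
    by (intro DERIV_isconst3[of 0 "max q P + 1"]) (use that P in auto)
  define \<psi> where "\<psi> q = f q powr (d + 1) - (d + 1) * \<phi> P * q" for q
  have "DERIV \<psi> q :> 0" if q: "q > 0" for q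
  proof -
    have "DERIV \<psi> q :> (d + 1) * f q powr (d + 1 - 1) * f' q - (d + 1) * \<phi> P"
      unfolding \<psi>_def
      using DERIV_diff[OF DERIV_fun_powr[OF E(3)[OF q] E(1)[OF q], of "d+1"]
          DERIV_cmult[OF DERIV_ident, of "(d+1) * \<phi> P"]]
      by simp
    then show ?thesis using \<phi>_const[OF q] unfolding \<phi>_def by (simp add: algebra_simps)
  qed
  then have "\<psi> 2 = \<psi> 1"
    by (intro DERIV_isconst3[of 0 3]) auto
  then have "\<phi> P = (f 2 powr (d+1) - f 1 powr (d+1)) / (d+1)"
    unfolding \<psi>_def using d by (simp add: field_simps)
  then show ?thesis unfolding \<phi>_def f_def f'_def .
qed

section \<open>The shear factor and its sonic root\<close>

definition shear_factor :: "real \<Rightarrow> real \<Rightarrow> real" where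
  "shear_factor d t = (t\<^sup>2 - 1 / d) / (t * (1 - t\<^sup>2))"

lemma shear_factor_identity:
  fixes d v A K \<Theta> :: real
  assumes d: "d > 0" and v: "0 < v" "v < 1"
    and \<Theta>: "\<Theta> = - d * K + (d - 1) * (v * A / (1 - v\<^sup>2)) - A / v"
  shows "\<Theta> / d + K = shear_factor d v * A"
proof -
  have "1 - v\<^sup>2 > 0" using v by (simp add: abs_square_less_1)
  with d v show ?thesis
    unfolding \<Theta> shear_factor_def by (simp add: field_simps power2_eq_square)
qed

lemma shear_factor_sonic:
  fixes d t :: real
  assumes t: "0 < t" "t < 1" and sonic: "t\<^sup>2 = 1 / d"
  shows "shear_factor d t = 0" and "DERIV (shear_factor d) t :> 2 / (1 - t\<^sup>2)"
proof -
  show "shear_factor d t = 0" unfolding shear_factor_def sonic by simp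
  have pos: "t * (1 - t\<^sup>2) > 0" using t by (simp add: abs_square_less_1)
  have num: "DERIV (\<lambda>t. t\<^sup>2 - 1 / d) t :> 2 * t"
    by (auto intro!: derivative_eq_intros)
  have den: "DERIV (\<lambda>t. t * (1 - t\<^sup>2)) t :> 1 - 3 * t\<^sup>2"
    by (auto intro!: derivative_eq_intros simp: algebra_simps power2_eq_square)
  have "DERIV (shear_factor d) t
      :> (2 * t * (t * (1 - t\<^sup>2)) - (1 - 3 * t\<^sup>2) * (t\<^sup>2 - 1 / d)) / (t * (1 - t\<^sup>2)) ^ Suc (Suc 0)"
    unfolding shear_factor_def[abs_def] by (rule DERIV_quotient[OF num den]) (use pos in linarith)
  moreover have "(2 * t * (t * (1 - t\<^sup>2)) - (1 - 3 * t\<^sup>2) * (t\<^sup>2 - 1 / d)) / (t * (1 - t\<^sup>2)) ^ Suc (Suc 0)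
      = 2 / (1 - t\<^sup>2)"
  proof -
    have cancel: "(2 * t * (t * w)) / (t * w) ^ Suc (Suc 0) = 2 / w" if "w \<noteq> 0" for w
      using t that by (simp add: field_simps)
    have "1 - t\<^sup>2 > 0" using t by (simp add: abs_square_less_1)
    then have "1 - t\<^sup>2 \<noteq> 0" by linarith
    moreover have "t\<^sup>2 - 1 / d = 0" using sonic by simp
    ultimately show ?thesis by (simp only: mult_zero_right diff_zero) (rule cancel)
  qed
  ultimately show "DERIV (shear_factor d) t :> 2 / (1 - t\<^sup>2)" by simp
qed

lemma lie_fun_at_root_of_factor:
  assumes W: "open W" "p \<in> W" and S: "\<And>y. y \<in> W \<Longrightarrow> S y = F (v y) * lie_fun X v y"
    and F: "DERIV F (v p) :> F'" "F (v p) = 0" "F' \<ge> 0"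
    and vd: "v differentiable (at p)" and Xvd: "(\<lambda>y. lie_fun X v y) differentiable (at p)"
  shows "S p = 0 \<and> lie_fun X S p \<ge> 0"
proof
  show "S p = 0" using S[OF W(2)] F(2) by simp
  have "lie_fun X S p = lie_fun X (\<lambda>y. F (v y) * lie_fun X v y) p"
    by (rule lie_fun_cong_open[OF W S])
  also have "\<dots> = lie_fun X (\<lambda>y. F (v y)) p * lie_fun X v p + F (v p) * lie_fun X (\<lambda>y. lie_fun X v y) p"
    by (rule lie_fun_mult[OF differentiable_compose_real[OF F(1) vd] Xvd])
  also have "\<dots> = F' * (lie_fun X v p)\<^sup>2"
    unfolding lie_fun_chain[OF F(1) vd] F(2) by (simp add: power2_eq_square)
  finally show "lie_fun X S p \<ge> 0" using F(3) by simp
qed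

section \<open>Steady radiation flows\<close>

locale steady_radiation_flow =
  fixes G :: "real^'n \<Rightarrow> real^'n^'n" and U :: "(real^'n) set"
    and H :: "real \<Rightarrow> real \<Rightarrow> real"
    and n h P s T v :: "real^'n \<Rightarrow> real"
    and u \<xi> \<eta> \<xi>b :: "real^'n \<Rightarrow> real^'n"
    and d :: real
  assumes d_def: "d = real CARD('n) - 1"
    and \<xi>b_def: "\<xi>b = (\<lambda>x. (1 / sqrt \<bar>gdot G x (\<xi> x) (\<xi> x)\<bar>) *\<^sub>R \<xi> x)"
    and dim: "CARD('n) \<ge> 2"
    and U_open: "open U"
    and metric_smooth: "\<forall>i j. smooth_on U (\<lambda>x. G x $ i $ j)"
    and metric_lorentz: "\<forall>x\<in>U. lorentzian_matrix (G x)"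
    and xi_smooth: "\<forall>i. smooth_on U (\<lambda>x. \<xi> x $ i)"
    and xi_killing: "killing_on G \<xi> U"
    and xi_timelike: "\<forall>x\<in>U. gdot G x (\<xi> x) (\<xi> x) < 0"
    and eos: "radiation_eos d H"
    and fluid: "perfect_fluid_on G U H n h P s T u"
    and n_C2: "Ck 2 U n" and h_C2: "Ck 2 U h" and P_C2: "Ck 2 U P" and s_C2: "Ck 2 U s"
    and u_C2: "\<forall>i. Ck 2 U (\<lambda>x. u x $ i)"
    and steady: "\<forall>x\<in>U. lie_fun \<xi> P x = 0 \<and> lie_fun \<xi> s x = 0 \<and> lie_vec \<xi> u x = 0"
    and decomp_u: "\<forall>x\<in>U. 0 \<le> v x \<and> v x < 1 \<and>
                     u x = (1 / sqrt (1 - (v x)\<^sup>2)) *\<^sub>R (\<xi>b x + v x *\<^sub>R \<eta> x)"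
    and eta_unit: "\<forall>x\<in>U. gdot G x (\<eta> x) (\<eta> x) = 1 \<and> gdot G x (\<xi>b x) (\<eta> x) = 0"
begin

lemma d_ge_1: "d \<ge> 1"
  using dim unfolding d_def by simp

lemma G_twice_diff: "twice_diff_on U (\<lambda>y. G y $ i $ j)"
  using metric_smooth smooth_on_imp_twice_diff_on by blast
lemma xi_twice_diff: "twice_diff_on U (\<lambda>y. \<xi> y $ i)"
  using xi_smooth smooth_on_imp_twice_diff_on by blast
lemma u_twice_diff: "twice_diff_on U (\<lambda>y. u y $ i)"
  using u_C2 Ck2_imp_twice_diff_on by blast
lemma n_twice_diff: "twice_diff_on U n"
  using n_C2 by (rule Ck2_imp_twice_diff_on)
lemma h_twice_diff: "twice_diff_on U h"
  using h_C2 by (rule Ck2_imp_twice_diff_on)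
lemma P_twice_diff: "twice_diff_on U P"
  using P_C2 by (rule Ck2_imp_twice_diff_on)
lemma s_twice_diff: "twice_diff_on U s"
  using s_C2 by (rule Ck2_imp_twice_diff_on)

lemma G_sym_on: assumes x: "x \<in> U" shows "G x $ i $ j = G x $ j $ i"
proof -
  have "transpose (G x) = G x" using metric_lorentz x unfolding lorentzian_matrix_def by blast
  then have "transpose (G x) $ j $ i = G x $ j $ i" by simp
  then show ?thesis unfolding transpose_def by simp
qed

lemma G_invertible_on: "x \<in> U \<Longrightarrow> invertible (G x)"
  using metric_lorentz lorentzian_matrix_invertible by blast

lemma metric_point_on: "x \<in> U \<Longrightarrow> metric_point G x"
proof unfold_locales
  assume x: "x \<in> U"
  show "\<And>i j. (\<lambda>y. G y $ i $ j) differentiable (at x)"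
    using G_twice_diff twice_diff_on_differentiable x by blast
  show "\<And>i j. G x $ i $ j = G x $ j $ i" using G_sym_on x by blast
  show "invertible (G x)" using G_invertible_on x .
  show "pd (\<lambda>y. G y $ i $ j) k x = pd (\<lambda>y. G y $ j $ i) k x" for k i j
    by (rule pd_cong_open[OF U_open x]) (simp add: G_sym_on)
qed

lemma gdot_sym_on: "x \<in> U \<Longrightarrow> gdot G x X Y = gdot G x Y X"
  by (rule gdot_symm) (rule G_sym_on)

lemma fluid_pos: assumes x: "x \<in> U" shows "n x > 0" "h x > 0" "P x > 0" "s x > 0" "T x > 0"
  using fluid x unfolding perfect_fluid_on_def by auto

lemma u_unit: "x \<in> U \<Longrightarrow> gdot G x (u x) (u x) = -1"
  using fluid unfolding perfect_fluid_on_def by blast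

lemma v_bounds: "x \<in> U \<Longrightarrow> 0 \<le> v x" "x \<in> U \<Longrightarrow> v x < 1"
  using decomp_u by auto

lemma one_minus_v_sq_pos: "x \<in> U \<Longrightarrow> 1 - (v x)\<^sup>2 > 0"
  using v_bounds[of x] by (simp add: abs_square_less_1)

text \<open>\<open>E\<close> is the Killing energy and \<open>\<gamma>\<close> the Lorentz factor of the flow relative to
the static observers \<open>\<xi>b\<close>.\<close>

definition "Q y = gdot G y (\<xi> y) (\<xi> y)"
definition "R y = sqrt (- Q y)"
definition "E y = gdot G y (u y) (\<xi> y)"
definition "\<gamma> y = 1 / sqrt (1 - (v y)\<^sup>2)"

lemma Q_neg: "x \<in> U \<Longrightarrow> Q x < 0"
  using xi_timelike unfolding Q_def by blast

lemma R_pos_sq: assumes x: "x \<in> U" shows "R x > 0" "(R x)\<^sup>2 = - Q x"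
  using Q_neg[OF x] unfolding R_def by auto

lemma gamma_pos_sq: assumes x: "x \<in> U" shows "\<gamma> x > 0" "(\<gamma> x)\<^sup>2 * (1 - (v x)\<^sup>2) = 1"
  using one_minus_v_sq_pos[OF x] unfolding \<gamma>_def by (auto simp: power_divide)

lemma xib_eq: assumes x: "x \<in> U" shows "\<xi>b x = (1 / R x) *\<^sub>R \<xi> x"
proof -
  have "\<bar>gdot G x (\<xi> x) (\<xi> x)\<bar> = - gdot G x (\<xi> x) (\<xi> x)" using xi_timelike x by auto
  then show ?thesis unfolding \<xi>b_def R_def Q_def by simp
qed

lemma xi_eq: assumes x: "x \<in> U" shows "\<xi> x = R x *\<^sub>R \<xi>b x"
  using xib_eq[OF x] R_pos_sq[OF x] by simp

lemma u_eq: "x \<in> U \<Longrightarrow> u x = \<gamma> x *\<^sub>R (\<xi>b x + v x *\<^sub>R \<eta> x)"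
  using decomp_u unfolding \<gamma>_def by blast

lemma gdot_xib_xib: assumes x: "x \<in> U" shows "gdot G x (\<xi>b x) (\<xi>b x) = -1"
proof -
  have "gdot G x (\<xi>b x) (\<xi>b x) = Q x / (R x)\<^sup>2"
    unfolding xib_eq[OF x] gdot_scaleL gdot_scaleR Q_def by (simp add: power2_eq_square)
  then show ?thesis using R_pos_sq[OF x] Q_neg[OF x] by simp
qed

lemma gdot_xib_eta: "x \<in> U \<Longrightarrow> gdot G x (\<xi>b x) (\<eta> x) = 0" "x \<in> U \<Longrightarrow> gdot G x (\<eta> x) (\<xi>b x) = 0"
  using eta_unit gdot_sym_on by auto

lemma gdot_xi_eta: "x \<in> U \<Longrightarrow> gdot G x (\<xi> x) (\<eta> x) = 0" "x \<in> U \<Longrightarrow> gdot G x (\<eta> x) (\<xi> x) = 0"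
  using gdot_xib_eta xi_eq by (auto simp: gdot_scaleL gdot_scaleR)

lemma E_eq: "x \<in> U \<Longrightarrow> E x = - \<gamma> x * R x"
  unfolding E_def by (simp add: xi_eq u_eq gdot_scaleL gdot_scaleR gdot_addL gdot_xib_xib gdot_xib_eta)

lemma E_neg: "x \<in> U \<Longrightarrow> E x < 0"
  using E_eq gamma_pos_sq R_pos_sq by simp

lemma E_sq_mult: assumes x: "x \<in> U" shows "(E x)\<^sup>2 * (1 - (v x)\<^sup>2) = - Q x"
proof -
  have "(E x)\<^sup>2 * (1 - (v x)\<^sup>2) = ((\<gamma> x)\<^sup>2 * (1 - (v x)\<^sup>2)) * (R x)\<^sup>2"
    unfolding E_eq[OF x] by (simp add: power_mult_distrib algebra_simps)
  then show ?thesis using gamma_pos_sq[OF x] R_pos_sq[OF x] by simp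
qed

lemma gamma_eq: assumes x: "x \<in> U" shows "\<gamma> x = - E x / R x"
  using E_eq[OF x] R_pos_sq[OF x] by (simp add: field_simps)

lemma u_decomp: assumes x: "x \<in> U" shows "u x = (E x / Q x) *\<^sub>R \<xi> x + (\<gamma> x * v x) *\<^sub>R \<eta> x"
proof -
  have "E x / Q x = \<gamma> x / R x"
    unfolding E_eq[OF x] using R_pos_sq[OF x] Q_neg[OF x] by (simp add: field_simps power2_eq_square)
  then show ?thesis unfolding u_eq[OF x] xib_eq[OF x] by (simp add: scaleR_add_right)
qed

lemma lie_fun_u:
  assumes x: "x \<in> U"
  shows "lie_fun u f x = (E x / Q x) * lie_fun \<xi> f x + (\<gamma> x * v x) * lie_fun \<eta> f x"
  by (rule lie_fun_combination) (rule u_decomp[OF x])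

lemma Q_twice_diff: "twice_diff_on U Q"
  unfolding Q_def[abs_def] using U_open G_twice_diff xi_twice_diff xi_twice_diff
  by (rule twice_diff_on_gdot)

lemma E_twice_diff: "twice_diff_on U E"
  unfolding E_def[abs_def] using U_open G_twice_diff u_twice_diff xi_twice_diff
  by (rule twice_diff_on_gdot)

lemma v_sq_eq: assumes x: "x \<in> U" shows "(v x)\<^sup>2 = 1 + Q x * inverse (E x * E x)"
proof -
  have "Q x * inverse (E x * E x) = - (1 - (v x)\<^sup>2)"
    using E_sq_mult[OF x] E_neg[OF x] by (simp add: field_simps power2_eq_square)
  then show ?thesis by simp
qed

lemma v_sq_twice_diff: "twice_diff_on U (\<lambda>y. 1 + Q y * inverse (E y * E y))"
proof -
  have "twice_diff_on U (\<lambda>y. inverse (E y * E y))"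
    by (rule twice_diff_on_inverse[OF twice_diff_on_mult[OF E_twice_diff E_twice_diff U_open] U_open])
      (use E_neg in fastforce)
  then show ?thesis by (intro twice_diff_on_add twice_diff_on_const twice_diff_on_mult Q_twice_diff U_open)
qed

text \<open>\<open>v\<close>, the square root of the function above, is twice differentiable only where it does not
vanish; so is \<open>\<eta>\<close>, which is recovered from \<open>u\<close> and \<open>\<xi>\<close> by dividing by \<open>v\<close>.  All derivatives
along the streamlines are therefore taken in the open set \<open>W\<close>.\<close>

definition "W = {x \<in> U. v x > 0}"

lemma W_subset: "W \<subseteq> U"
  unfolding W_def by blast

lemma W_in_U: "x \<in> W \<Longrightarrow> x \<in> U"
  unfolding W_def by blast

lemma v_pos: "x \<in> W \<Longrightarrow> v x > 0"
  unfolding W_def by blast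

lemma W_open: "open W"
proof -
  have "v x > 0 \<longleftrightarrow> 1 + Q x * inverse (E x * E x) > 0" if "x \<in> U" for x
    unfolding v_sq_eq[OF that, symmetric] using v_bounds(1)[OF that] by (auto simp: less_le)
  then have "W = U \<inter> (\<lambda>y. 1 + Q y * inverse (E y * E y)) -` {0<..}"
    unfolding W_def by auto
  moreover have "continuous_on U (\<lambda>y. 1 + Q y * inverse (E y * E y))"
    by (rule twice_diff_on_imp_continuous_on[OF v_sq_twice_diff])
  ultimately show ?thesis
    using continuous_on_open_vimage[OF U_open] open_greaterThan by (metis Int_commute)
qed

lemma v_twice_diff: "twice_diff_on W v"
proof -
  have "twice_diff_on W (\<lambda>y. sqrt (1 + Q y * inverse (E y * E y)))"
    by (rule twice_diff_on_sqrt[OF twice_diff_on_subset[OF v_sq_twice_diff W_subset] W_open])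
      (metis W_in_U v_pos v_sq_eq zero_less_power)
  moreover have "sqrt (1 + Q y * inverse (E y * E y)) = v y" if "y \<in> W" for y
    using v_sq_eq[OF W_in_U[OF that], symmetric] v_pos[OF that] by simp
  ultimately show ?thesis by (rule twice_diff_on_cong_open[OF _ W_open])
qed

lemma eta_eq:
  assumes x: "x \<in> W"
  shows "\<eta> x $ m = inverse (v x) * (sqrt (1 - (v x)\<^sup>2) * u x $ m - inverse (R x) * \<xi> x $ m)"
proof -
  have xU: "x \<in> U" using x by (rule W_in_U)
  have "sqrt (1 - (v x)\<^sup>2) * \<gamma> x = 1" unfolding \<gamma>_def using one_minus_v_sq_pos[OF xU] by simp
  then have "sqrt (1 - (v x)\<^sup>2) *\<^sub>R u x = \<xi>b x + v x *\<^sub>R \<eta> x"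
    unfolding u_eq[OF xU] by (simp add: scaleR_scaleR)
  then have "v x *\<^sub>R \<eta> x = sqrt (1 - (v x)\<^sup>2) *\<^sub>R u x - \<xi>b x" by (metis add_diff_cancel_left')
  moreover have "\<eta> x = inverse (v x) *\<^sub>R (v x *\<^sub>R \<eta> x)" using v_pos[OF x] by simp
  ultimately have "\<eta> x = inverse (v x) *\<^sub>R (sqrt (1 - (v x)\<^sup>2) *\<^sub>R u x - inverse (R x) *\<^sub>R \<xi> x)"
    unfolding xib_eq[OF xU] by (simp add: inverse_eq_divide)
  then show ?thesis by simp
qed

lemma R_twice_diff: "twice_diff_on U R"
  unfolding R_def[abs_def]
proof (rule twice_diff_on_sqrt[OF _ U_open])
  show "twice_diff_on U (\<lambda>y. - Q y)"
    using twice_diff_on_diff[OF twice_diff_on_const Q_twice_diff U_open, of 0] by simp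
  show "\<And>y. y \<in> U \<Longrightarrow> - Q y > 0" using Q_neg by fastforce
qed

lemma eta_twice_diff: "twice_diff_on W (\<lambda>y. \<eta> y $ m)"
proof -
  have "twice_diff_on W (\<lambda>y. sqrt (1 - (v y)\<^sup>2))"
  proof (rule twice_diff_on_sqrt[OF _ W_open])
    show "twice_diff_on W (\<lambda>y. 1 - (v y)\<^sup>2)" unfolding power2_eq_square
      by (intro twice_diff_on_diff twice_diff_on_const twice_diff_on_mult v_twice_diff W_open)
    show "\<And>y. y \<in> W \<Longrightarrow> 1 - (v y)\<^sup>2 > 0" using one_minus_v_sq_pos W_in_U by blast
  qed
  moreover have "twice_diff_on W (\<lambda>y. inverse (R y))"
    by (rule twice_diff_on_inverse[OF twice_diff_on_subset[OF R_twice_diff W_subset] W_open])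
      (use R_pos_sq(1) W_in_U in fastforce)
  moreover have "twice_diff_on W (\<lambda>y. inverse (v y))"
    by (rule twice_diff_on_inverse[OF v_twice_diff W_open]) (use v_pos in fastforce)
  ultimately have "twice_diff_on W (\<lambda>y. inverse (v y) * (sqrt (1 - (v y)\<^sup>2) * u y $ m - inverse (R y) * \<xi> y $ m))"
    using twice_diff_on_subset[OF u_twice_diff W_subset] twice_diff_on_subset[OF xi_twice_diff W_subset]
    by (intro twice_diff_on_mult twice_diff_on_diff W_open)
  then show ?thesis by (rule twice_diff_on_cong_open[OF _ W_open]) (simp add: eta_eq)
qed

lemma G_differentiable: "x \<in> U \<Longrightarrow> (\<lambda>y. G y $ i $ j) differentiable (at x)"
  using G_twice_diff twice_diff_on_differentiable by blast
lemma xi_differentiable: "x \<in> U \<Longrightarrow> (\<lambda>y. \<xi> y $ i) differentiable (at x)"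
  using xi_twice_diff twice_diff_on_differentiable by blast
lemma u_differentiable: "x \<in> U \<Longrightarrow> (\<lambda>y. u y $ i) differentiable (at x)"
  using u_twice_diff twice_diff_on_differentiable by blast
lemma eta_differentiable: "x \<in> W \<Longrightarrow> (\<lambda>y. \<eta> y $ i) differentiable (at x)"
  using eta_twice_diff twice_diff_on_differentiable by blast
lemma n_differentiable: "x \<in> U \<Longrightarrow> n differentiable (at x)"
  using n_twice_diff twice_diff_on_differentiable by blast
lemma h_differentiable: "x \<in> U \<Longrightarrow> h differentiable (at x)"
  using h_twice_diff twice_diff_on_differentiable by blast
lemma P_differentiable: "x \<in> U \<Longrightarrow> P differentiable (at x)"
  using P_twice_diff twice_diff_on_differentiable by blast
lemma s_differentiable: "x \<in> U \<Longrightarrow> s differentiable (at x)"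
  using s_twice_diff twice_diff_on_differentiable by blast
lemma Q_differentiable: "x \<in> U \<Longrightarrow> Q differentiable (at x)"
  using Q_twice_diff twice_diff_on_differentiable by blast
lemma R_differentiable: "x \<in> U \<Longrightarrow> R differentiable (at x)"
  using R_twice_diff twice_diff_on_differentiable by blast
lemma E_differentiable: "x \<in> U \<Longrightarrow> E differentiable (at x)"
  using E_twice_diff twice_diff_on_differentiable by blast
lemma v_differentiable: "x \<in> W \<Longrightarrow> v differentiable (at x)"
  using v_twice_diff twice_diff_on_differentiable by blast

lemma lie_fun_v_differentiable:
  assumes x: "x \<in> W" shows "(\<lambda>y. lie_fun \<eta> v y) differentiable (at x)"
  unfolding lie_fun_def
  by (intro differentiable_sum differentiable_mult ballI eta_differentiable[OF x]
      twice_diff_on_pd_differentiable[OF v_twice_diff x]) simp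

lemma differentiable_ginv: assumes x: "x \<in> U" shows "(\<lambda>y. ginv G y $ k $ j) differentiable (at x)"
  using differentiable_ginv_open[OF U_open x G_invertible_on G_differentiable[OF x]] .

lemma killing_form_xi: "x \<in> U \<Longrightarrow> metric_point.killing_form G x \<xi> m k = 0"
  using xi_killing metric_point_on
  unfolding killing_on_def metric_point.killing_form_def[OF metric_point_on] by blast

lemma div_xi: assumes x: "x \<in> U" shows "div_vec G \<xi> x = 0"
proof -
  interpret metric_point G x by (rule metric_point_on[OF x])
  have "2 * div_vec G \<xi> x = 0"
    unfolding killing_form_trace[symmetric] using killing_form_xi[OF x] by simp
  then show ?thesis by simp
qed

lemma lie_xi_Q: assumes x: "x \<in> U" shows "lie_fun \<xi> Q x = 0"
proof -
  interpret metric_point G x by (rule metric_point_on[OF x])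
  have "lie_fun \<xi> Q x = (\<Sum>m\<in>UNIV. \<Sum>n\<in>UNIV. \<xi> x $ m * \<xi> x $ n * killing_form \<xi> m n)"
    unfolding Q_def[abs_def] lie_fun_gdot[OF xi_differentiable[OF x] xi_differentiable[OF x]]
      killing_form_contract ..
  then show ?thesis using killing_form_xi[OF x] by simp
qed

lemma lie_xi_E: assumes x: "x \<in> U" shows "lie_fun \<xi> E x = 0"
proof -
  interpret metric_point G x by (rule metric_point_on[OF x])
  have "lie_vec \<xi> u x $ m = 0" for m using steady x by simp
  then have commute: "deriv_along u \<xi> m = deriv_along \<xi> u m" for m
    unfolding lie_vec_def deriv_along_def by (simp add: sum_subtractf)
  have "lie_fun \<xi> E x = (\<Sum>m\<in>UNIV. \<Sum>n\<in>UNIV. u x $ m * \<xi> x $ n * killing_form \<xi> m n)"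
    unfolding E_def[abs_def] lie_fun_gdot[OF u_differentiable[OF x] xi_differentiable[OF x]]
      killing_form_contract commute ..
  then show ?thesis using killing_form_xi[OF x] by simp
qed

lemma cd_eta_xi_xi:
  assumes x: "x \<in> W"
  shows "(\<Sum>i\<in>UNIV. \<Sum>j\<in>UNIV. cd_covec G (lower G \<eta>) i j x * \<xi> x $ i * \<xi> x $ j) = lie_fun \<eta> Q x / 2"
proof -
  have xU: "x \<in> U" using x by (rule W_in_U)
  interpret metric_point G x by (rule metric_point_on[OF xU])
  have "lie_fun \<xi> (\<lambda>y. gdot G y (\<eta> y) (\<xi> y)) x = lie_fun \<xi> (\<lambda>y. 0) x"
    by (rule lie_fun_cong_open[OF U_open xU]) (use gdot_xi_eta in blast)
  then have "lie_fun \<xi> (\<lambda>y. gdot G y (\<eta> y) (\<xi> y)) x = 0" by (simp add: lie_fun_const)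
  then show ?thesis unfolding Q_def[abs_def]
    by (rule cd_covec_lower_quadratic[OF xi_differentiable[OF xU] eta_differentiable[OF x], rotated])
      (simp add: killing_form_xi[OF xU])
qed

lemma shear_xib_xib_eq:
  assumes x: "x \<in> W"
    and shear: "\<And>i j. cd_covec G (lower G \<eta>) i j x - lower G \<eta> x $ i * lower G acc x $ j
        = div_vec G \<eta> x / d * (G x $ i $ j - lower G \<eta> x $ i * lower G \<eta> x $ j)
          + \<sigma> x $ i $ j + \<omega> x $ i $ j"
    and omega: "\<And>i j. \<omega> x $ i $ j = - \<omega> x $ j $ i"
  shows "(\<Sum>i\<in>UNIV. \<Sum>j\<in>UNIV. \<sigma> x $ i $ j * \<xi>b x $ i * \<xi>b x $ j)
       = lie_fun \<eta> Q x / (2 * (R x)\<^sup>2) + div_vec G \<eta> x / d"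
proof -
  have xU: "x \<in> U" using x by (rule W_in_U)
  have "(\<Sum>i\<in>UNIV. lower G \<eta> x $ i * \<xi>b x $ i) = gdot G x (\<xi>b x) (\<eta> x)"
    unfolding lower_def gdot_def by (simp add: sum_distrib_right sum_distrib_left algebra_simps)
  then have orth: "(\<Sum>i\<in>UNIV. lower G \<eta> x $ i * \<xi>b x $ i) = 0"
    using gdot_xib_eta[OF xU] by simp
  have unit: "(\<Sum>i\<in>UNIV. \<Sum>j\<in>UNIV. G x $ i $ j * \<xi>b x $ i * \<xi>b x $ j) = -1"
    using gdot_xib_xib[OF xU] unfolding gdot_def by (simp add: algebra_simps)
  have "(\<Sum>i\<in>UNIV. \<Sum>j\<in>UNIV. cd_covec G (lower G \<eta>) i j x * \<xi>b x $ i * \<xi>b x $ j)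
      = (\<Sum>i\<in>UNIV. \<Sum>j\<in>UNIV. cd_covec G (lower G \<eta>) i j x * \<xi> x $ i * \<xi> x $ j) / (R x)\<^sup>2"
    unfolding xib_eq[OF xU] by (simp add: sum_divide_distrib power2_eq_square)
  then show ?thesis
    using shear_decomposition_quadratic[OF shear orth unit omega] cd_eta_xi_xi[OF x] by simp
qed

subsection \<open>The fluid equations\<close>

lemma lie_fun_gibbs:
  assumes x: "x \<in> U"
  shows "lie_fun X h x = T x * lie_fun X s x + lie_fun X P x / n x"
proof -
  have "\<forall>m. pd h m x = T x * pd s m x + pd P m x / n x"
    using fluid x unfolding perfect_fluid_on_def by blast
  then show ?thesis unfolding lie_fun_def
    by (simp add: sum.distrib sum_distrib_left sum_divide_distrib algebra_simps)
qed

lemma continuity_u: assumes x: "x \<in> U" shows "lie_fun u n x + n x * div_vec G u x = 0"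
proof -
  have "div_vec G (\<lambda>y. n y *\<^sub>R u y) x = 0" using fluid x unfolding perfect_fluid_on_def by blast
  then show ?thesis unfolding div_vec_scaleR[OF n_differentiable[OF x] u_differentiable[OF x]] .
qed

definition "Tmn y = (\<chi> i j. n y * h y * u y $ i * u y $ j + P y * ginv G y $ i $ j)"

lemma Tmn_differentiable: "x \<in> U \<Longrightarrow> (\<lambda>y. Tmn y $ m $ k) differentiable (at x)"
  unfolding Tmn_def
  by (simp add: differentiable_add differentiable_mult n_differentiable h_differentiable
      P_differentiable u_differentiable differentiable_ginv)

lemma Tmn_sym: assumes x: "x \<in> U" shows "Tmn x $ m $ l = Tmn x $ l $ m"
proof -
  interpret metric_point G x by (rule metric_point_on[OF x])
  show ?thesis unfolding Tmn_def using ginv_sym[of m l] by (simp add: algebra_simps)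
qed

lemma div_Tmn: assumes x: "x \<in> U" shows "div_tensor G Tmn k x = 0"
proof -
  have "Tmn = (\<lambda>y. \<chi> i j. n y * h y * u y $ i * u y $ j + P y * ginv G y $ i $ j)"
    by (rule ext) (simp add: Tmn_def)
  then show ?thesis using fluid x unfolding perfect_fluid_on_def by simp
qed

lemma Tmn_lower_contract:
  assumes y: "y \<in> U"
  shows "(\<Sum>k\<in>UNIV. Tmn y $ m $ k * lower G X y $ k)
       = n y * h y * gdot G y (u y) (X y) * u y $ m + P y * X y $ m"
proof -
  interpret metric_point G y by (rule metric_point_on[OF y])
  have "(\<Sum>k\<in>UNIV. u y $ k * lower G X y $ k) = gdot G y (u y) (X y)"
    unfolding lower_def gdot_def by (simp add: sum_distrib_left algebra_simps)
  moreover have "(\<Sum>k\<in>UNIV. Tmn y $ m $ k * lower G X y $ k)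
      = n y * h y * u y $ m * (\<Sum>k\<in>UNIV. u y $ k * lower G X y $ k)
      + P y * (\<Sum>k\<in>UNIV. ginv G y $ m $ k * lower G X y $ k)"
    unfolding Tmn_def by (simp add: sum.distrib sum_distrib_left algebra_simps)
  ultimately show ?thesis using ginv_lower by simp
qed

text \<open>The Euler equations contracted with a vector field \<open>X\<close>: since \<open>T\<close> is symmetric, only
the Killing form of \<open>X\<close> survives.\<close>

lemma div_Tmn_lower:
  assumes x: "x \<in> U" and Xd: "\<And>l. (\<lambda>y. X y $ l) differentiable (at x)"
  shows "div_vec G (\<lambda>y. \<chi> m. \<Sum>k\<in>UNIV. Tmn y $ m $ k * lower G X y $ k) x
       = (\<Sum>m\<in>UNIV. \<Sum>l\<in>UNIV. Tmn x $ m $ l * metric_point.killing_form G x X m l) / 2"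
proof -
  interpret metric_point G x by (rule metric_point_on[OF x])
  have "(\<Sum>m\<in>UNIV. \<Sum>l\<in>UNIV. Tmn x $ m $ l * cd_covec G (lower G X) m l x)
     = (\<Sum>m\<in>UNIV. \<Sum>l\<in>UNIV. Tmn x $ m $ l * (cd_covec G (lower G X) m l x + cd_covec G (lower G X) l m x)) / 2"
    by (rule sum_symmetric_contract) (rule Tmn_sym[OF x])
  then show ?thesis
    using lower_contract_div_tensor[OF Tmn_differentiable[OF x] Xd] div_Tmn[OF x]
    by (simp add: cd_covec_lower_symmetrized[OF Xd])
qed

text \<open>Bernoulli's law: contraction of the Euler equations with the Killing field.\<close>

lemma bernoulli: assumes x: "x \<in> U" shows "lie_fun u (\<lambda>y. h y * E y) x = 0"
proof -
  define V where "V = (\<lambda>y. (n y * (h y * E y)) *\<^sub>R u y + P y *\<^sub>R \<xi> y)"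
  have "(\<chi> m. \<Sum>k\<in>UNIV. Tmn y $ m $ k * lower G \<xi> y $ k) = V y" if "y \<in> U" for y
    unfolding V_def vec_eq_iff vec_lambda_beta Tmn_lower_contract[OF that] by (simp add: E_def algebra_simps)
  then have "div_vec G V x = 0"
    using div_Tmn_lower[OF x xi_differentiable[OF x]] killing_form_xi[OF x]
      div_vec_cong_open[OF U_open x, of "\<lambda>y. \<chi> m. \<Sum>k\<in>UNIV. Tmn y $ m $ k * lower G \<xi> y $ k" V]
    by simp
  moreover have "(\<lambda>y. n y * (h y * E y)) differentiable (at x)"
    by (intro differentiable_mult n_differentiable[OF x] h_differentiable[OF x] E_differentiable[OF x])
  moreover have "lie_fun u n x = - n x * div_vec G u x" "lie_fun \<xi> P x = 0"
    using continuity_u[OF x] steady x by auto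
  ultimately have "n x * lie_fun u (\<lambda>y. h y * E y) x = 0"
    unfolding V_def
    by (simp add: div_vec_add differentiable_mult u_differentiable[OF x] P_differentiable[OF x]
        xi_differentiable[OF x] div_vec_scaleR div_xi[OF x] lie_fun_mult n_differentiable[OF x]
        h_differentiable[OF x] E_differentiable[OF x] algebra_simps)
  then show ?thesis using fluid_pos(1)[OF x] by simp
qed

text \<open>Adiabaticity: contraction of the Euler equations with \<open>u\<close>, using \<open>u\<cdot>u = -1\<close>.\<close>

lemma adiabatic: assumes x: "x \<in> U" shows "lie_fun u s x = 0"
proof -
  interpret metric_point G x by (rule metric_point_on[OF x])
  define V where "V = (\<lambda>y. (P y - n y * h y) *\<^sub>R u y)"
  have "lie_fun u (\<lambda>y. gdot G y (u y) (u y)) x = lie_fun u (\<lambda>y. -1) x"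
    by (rule lie_fun_cong_open[OF U_open x]) (use u_unit in blast)
  then have "(\<Sum>m\<in>UNIV. \<Sum>l\<in>UNIV. u x $ m * u x $ l * killing_form u m l) = 0"
    unfolding killing_form_contract lie_fun_gdot[OF u_differentiable[OF x] u_differentiable[OF x], symmetric]
    by (simp add: lie_fun_const)
  moreover have "(\<Sum>m\<in>UNIV. \<Sum>l\<in>UNIV. Tmn x $ m $ l * killing_form u m l)
      = n x * h x * (\<Sum>m\<in>UNIV. \<Sum>l\<in>UNIV. u x $ m * u x $ l * killing_form u m l)
        + P x * (\<Sum>m\<in>UNIV. \<Sum>l\<in>UNIV. gi m l * killing_form u m l)"
    unfolding Tmn_def by (simp add: sum.distrib sum_distrib_left algebra_simps)
  ultimately have "(\<Sum>m\<in>UNIV. \<Sum>l\<in>UNIV. Tmn x $ m $ l * killing_form u m l) = 2 * P x * div_vec G u x"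
    by (simp add: killing_form_trace)
  moreover have "(\<chi> m. \<Sum>k\<in>UNIV. Tmn y $ m $ k * lower G u y $ k) = V y" if "y \<in> U" for y
    unfolding V_def vec_eq_iff vec_lambda_beta Tmn_lower_contract[OF that] u_unit[OF that]
    by (simp add: algebra_simps)
  ultimately have "div_vec G V x = P x * div_vec G u x"
    using div_Tmn_lower[OF x u_differentiable[OF x]]
      div_vec_cong_open[OF U_open x, of "\<lambda>y. \<chi> m. \<Sum>k\<in>UNIV. Tmn y $ m $ k * lower G u y $ k" V]
    by simp
  moreover have Pnh: "(\<lambda>y. P y - n y * h y) differentiable (at x)"
    by (intro differentiable_diff differentiable_mult n_differentiable[OF x] h_differentiable[OF x]
        P_differentiable[OF x])
  moreover have "lie_fun u n x = - n x * div_vec G u x"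
    using continuity_u[OF x] by simp
  moreover have "n x * lie_fun u h x = n x * T x * lie_fun u s x + lie_fun u P x"
    unfolding lie_fun_gibbs[OF x] using fluid_pos(1)[OF x] by (simp add: algebra_simps)
  ultimately have "n x * T x * lie_fun u s x = 0"
    unfolding V_def div_vec_scaleR[OF Pnh u_differentiable[OF x]]
      lie_fun_diff[OF P_differentiable[OF x] differentiable_mult[OF n_differentiable[OF x] h_differentiable[OF x]]]
      lie_fun_mult[OF n_differentiable[OF x] h_differentiable[OF x]]
    by (simp add: algebra_simps)
  then show ?thesis using fluid_pos(1,5)[OF x] by simp
qed

text \<open>By \<open>radiation_eos_first_integral\<close>, \<open>(\<partial>\<^sub>P h) h\<^sup>d\<close> is a function of the entropy alone;
since \<open>n = 1/\<partial>\<^sub>P h\<close>, this gives \<open>n = h\<^sup>d / eos_invariant s\<close>.\<close>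

definition "eos_invariant z = (H 2 z powr (d+1) - H 1 z powr (d+1)) / (d+1)"

lemma eos_invariant_eq:
  "P' > 0 \<Longrightarrow> z > 0 \<Longrightarrow> eos_hP H P' z * H P' z powr d = eos_invariant z"
  unfolding eos_invariant_def using radiation_eos_first_integral[OF eos] d_ge_1 by simp

lemma eos_invariant_pos: assumes z: "z > 0" shows "eos_invariant z > 0"
proof -
  have "H 1 z > 0" "eos_hP H 1 z > 0" using eos z unfolding radiation_eos_def by auto
  then have "eos_hP H 1 z * H 1 z powr d > 0" by simp
  then show ?thesis using eos_invariant_eq[of 1 z] z by simp
qed

lemma eos_invariant_has_derivative:
  assumes z: "z > 0" shows "\<exists>D. (eos_invariant has_real_derivative D) (at z)"
proof -
  have H: "H q z > 0" "DERIV (\<lambda>r. H q r) z :> deriv (\<lambda>r. H q r) z" if "q > 0" for q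
    using eos z that DERIV_deriv_iff_real_differentiable unfolding radiation_eos_def by blast+
  have "DERIV eos_invariant z :> ((d+1) * H 2 z powr (d + 1 - of_nat 1) * deriv (\<lambda>r. H 2 r) z
       - (d+1) * H 1 z powr (d + 1 - of_nat 1) * deriv (\<lambda>r. H 1 r) z) / (d+1)"
    unfolding eos_invariant_def[abs_def]
    by (intro DERIV_cdivide DERIV_diff DERIV_fun_powr H) auto
  then show ?thesis by blast
qed

lemma n_eq_h_powr: assumes y: "y \<in> U" shows "n y = h y powr d * inverse (eos_invariant (s y))"
proof -
  have state: "h y = H (P y) (s y)" "n y = eos_n H (P y) (s y)"
    using fluid y unfolding perfect_fluid_on_def by auto
  have "eos_hP H (P y) (s y) * H (P y) (s y) powr d = eos_invariant (s y)"
    by (rule eos_invariant_eq) (use fluid_pos[OF y] in auto)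
  moreover have "eos_hP H (P y) (s y) > 0"
    using eos fluid_pos[OF y] unfolding radiation_eos_def by blast
  ultimately have "1 / eos_hP H (P y) (s y) = H (P y) (s y) powr d / eos_invariant (s y)"
    using eos_invariant_pos[of "s y"] fluid_pos[OF y] by (simp add: field_simps)
  then show ?thesis unfolding state eos_n_def by (simp add: divide_inverse)
qed

lemma lie_fun_n:
  assumes x: "x \<in> U" and s: "lie_fun X s x = 0"
  shows "lie_fun X n x = d * n x / h x * lie_fun X h x"
proof -
  have pos: "h x > 0" "s x > 0" using fluid_pos[OF x] by auto
  have Dpowr: "DERIV (\<lambda>t. t powr d) (h x) :> d * h x powr (d - of_nat 1) * 1"
    by (rule DERIV_fun_powr[OF DERIV_ident]) (use pos in simp)
  obtain D where "(eos_invariant has_real_derivative D) (at (s x))"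
    using eos_invariant_has_derivative pos by blast
  then have Dinv: "DERIV (\<lambda>t. inverse (eos_invariant t)) (s x)
      :> - (D * inverse (eos_invariant (s x) ^ Suc (Suc 0)))"
    by (rule DERIV_inverse_fun) (use eos_invariant_pos[OF pos(2)] in simp)
  have hd: "(\<lambda>y. h y powr d) differentiable (at x)"
    by (rule differentiable_compose_real[OF Dpowr h_differentiable[OF x]])
  have cd: "(\<lambda>y. inverse (eos_invariant (s y))) differentiable (at x)"
    by (rule differentiable_compose_real[OF Dinv s_differentiable[OF x]])
  have "lie_fun X n x = lie_fun X (\<lambda>y. h y powr d * inverse (eos_invariant (s y))) x"
    by (rule lie_fun_cong_open[OF U_open x]) (rule n_eq_h_powr)
  also have "\<dots> = lie_fun X (\<lambda>y. h y powr d) x * inverse (eos_invariant (s x))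
      + h x powr d * lie_fun X (\<lambda>y. inverse (eos_invariant (s y))) x"
    by (rule lie_fun_mult[OF hd cd])
  also have "\<dots> = d * h x powr (d - 1) * lie_fun X h x * inverse (eos_invariant (s x))"
    unfolding lie_fun_chain[OF Dpowr h_differentiable[OF x]] lie_fun_chain[OF Dinv s_differentiable[OF x]] s
    by simp
  also have "\<dots> = d * n x / h x * lie_fun X h x"
    unfolding n_eq_h_powr[OF x] using pos by (simp add: powr_diff field_simps)
  finally show ?thesis .
qed

lemma lie_xi_h: "x \<in> U \<Longrightarrow> lie_fun \<xi> h x = 0"
  using lie_fun_gibbs steady by simp

lemma lie_xi_n: "x \<in> U \<Longrightarrow> lie_fun \<xi> n x = 0"
  using lie_fun_n lie_xi_h steady by simp

definition "flux_xi y = n y * E y / Q y"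
definition "flux_eta y = - n y * v y * E y / R y"

lemma flux_decomp: assumes y: "y \<in> U" shows "n y *\<^sub>R u y = flux_xi y *\<^sub>R \<xi> y + flux_eta y *\<^sub>R \<eta> y"
  unfolding u_decomp[OF y] flux_xi_def flux_eta_def gamma_eq[OF y]
  by (simp add: scaleR_add_right scaleR_right_diff_distrib)

lemma flux_xi_differentiable: assumes x: "x \<in> U" shows "flux_xi differentiable (at x)"
  unfolding flux_xi_def[abs_def] using Q_neg[OF x]
  by (intro differentiable_divide n_differentiable E_differentiable Q_differentiable differentiable_mult x) auto

lemma flux_eta_differentiable: assumes x: "x \<in> W" shows "flux_eta differentiable (at x)"
  unfolding flux_eta_def[abs_def] using R_pos_sq(1)[OF W_in_U[OF x]]
  by (intro differentiable_divide differentiable_mult differentiable_minus n_differentiable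
      E_differentiable R_differentiable v_differentiable W_in_U x) auto

lemma lie_xi_flux_xi: assumes x: "x \<in> U" shows "lie_fun \<xi> flux_xi x = 0"
proof -
  have q: "Q x \<noteq> 0" using Q_neg[OF x] by simp
  have "lie_fun \<xi> flux_xi x = lie_fun \<xi> (\<lambda>y. (n y * E y) * inverse (Q y)) x"
    unfolding flux_xi_def by (simp add: divide_inverse)
  also have "\<dots> = lie_fun \<xi> (\<lambda>y. n y * E y) x * inverse (Q x) + n x * E x * lie_fun \<xi> (\<lambda>y. inverse (Q y)) x"
    by (rule lie_fun_mult[OF differentiable_mult[OF n_differentiable[OF x] E_differentiable[OF x]]
          differentiable_inverse_real[OF Q_differentiable[OF x] q]])
  also have "\<dots> = 0"
    unfolding lie_fun_mult[OF n_differentiable[OF x] E_differentiable[OF x]]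
      lie_fun_chain[OF DERIV_inverse[OF q] Q_differentiable[OF x]]
    using lie_xi_n[OF x] lie_xi_E[OF x] lie_xi_Q[OF x] by simp
  finally show ?thesis .
qed

text \<open>The steady continuity equation: the \<open>\<xi>\<close>-part of the current \<open>n u\<close> is divergence free.\<close>

lemma continuity_eta:
  assumes x: "x \<in> W"
  shows "lie_fun \<eta> flux_eta x + flux_eta x * div_vec G \<eta> x = 0"
proof -
  have xU: "x \<in> U" using x by (rule W_in_U)
  have "div_vec G (\<lambda>y. n y *\<^sub>R u y) x = 0" using fluid xU unfolding perfect_fluid_on_def by blast
  moreover have "div_vec G (\<lambda>y. n y *\<^sub>R u y) x = div_vec G (\<lambda>y. flux_xi y *\<^sub>R \<xi> y + flux_eta y *\<^sub>R \<eta> y) x"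
    by (rule div_vec_cong_open[OF U_open xU flux_decomp])
  moreover have "div_vec G (\<lambda>y. flux_xi y *\<^sub>R \<xi> y + flux_eta y *\<^sub>R \<eta> y) x
     = (lie_fun \<xi> flux_xi x + flux_xi x * div_vec G \<xi> x) + (lie_fun \<eta> flux_eta x + flux_eta x * div_vec G \<eta> x)"
    using flux_xi_differentiable[OF xU] xi_differentiable[OF xU] flux_eta_differentiable[OF x]
      eta_differentiable[OF x]
    by (simp add: div_vec_add differentiable_mult div_vec_scaleR)
  ultimately show ?thesis using lie_xi_flux_xi[OF xU] div_xi[OF xU] by simp
qed

lemma conserved_along_streamlines:
  assumes x: "x \<in> W" and "lie_fun \<xi> f x = 0" and "lie_fun u f x = 0"
  shows "lie_fun \<eta> f x = 0"
proof -
  have "\<gamma> x * v x \<noteq> 0" using gamma_pos_sq(1)[OF W_in_U[OF x]] v_pos[OF x] by simp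
  then show ?thesis using assms(2,3) lie_fun_u[OF W_in_U[OF x], of f] by simp
qed

lemma lie_eta_hE: assumes x: "x \<in> W" shows "lie_fun \<eta> (\<lambda>y. h y * E y) x = 0"
proof (rule conserved_along_streamlines[OF x])
  have xU: "x \<in> U" using x by (rule W_in_U)
  show "lie_fun \<xi> (\<lambda>y. h y * E y) x = 0"
    unfolding lie_fun_mult[OF h_differentiable[OF xU] E_differentiable[OF xU]]
    using lie_xi_h[OF xU] lie_xi_E[OF xU] by simp
  show "lie_fun u (\<lambda>y. h y * E y) x = 0" by (rule bernoulli[OF xU])
qed

lemma lie_eta_s: assumes x: "x \<in> W" shows "lie_fun \<eta> s x = 0"
  using conserved_along_streamlines[OF x] steady adiabatic W_in_U[OF x] by blast

lemma log_deriv_n: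
  assumes x: "x \<in> W" shows "lie_fun \<eta> n x / n x = - d * (lie_fun \<eta> E x / E x)"
proof -
  have xU: "x \<in> U" using x by (rule W_in_U)
  have "lie_fun \<eta> h x * E x + h x * lie_fun \<eta> E x = 0"
    using lie_eta_hE[OF x] unfolding lie_fun_mult[OF h_differentiable[OF xU] E_differentiable[OF xU]] .
  then have "lie_fun \<eta> h x = - h x * lie_fun \<eta> E x / E x"
    using E_neg[OF xU] by (simp add: field_simps)
  then show ?thesis
    using lie_fun_n[OF xU lie_eta_s[OF x]] fluid_pos(1,2)[OF xU] by (simp add: field_simps)
qed

lemma log_deriv_R:
  assumes x: "x \<in> U" shows "lie_fun \<eta> R x / R x = - lie_fun \<eta> Q x / (2 * (R x)\<^sup>2)"
proof -
  have "DERIV sqrt ((-1) * Q x) :> inverse (R x) / 2"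
    using DERIV_real_sqrt Q_neg[OF x] unfolding R_def by force
  from lie_fun_chain[OF this differentiable_mult[OF differentiable_const Q_differentiable[OF x]]]
  have "lie_fun \<eta> (\<lambda>y. sqrt ((-1) * Q y)) x = inverse (R x) / 2 * ((-1) * lie_fun \<eta> Q x)"
    unfolding lie_fun_cmult[OF Q_differentiable[OF x]] .
  moreover have "R = (\<lambda>y. sqrt ((-1) * Q y))" unfolding R_def[abs_def] by simp
  ultimately have "lie_fun \<eta> R x = - lie_fun \<eta> Q x / (2 * R x)"
    by (simp add: field_simps)
  then show ?thesis using R_pos_sq(1)[OF x] by (simp add: field_simps power2_eq_square)
qed

text \<open>Differentiating \<open>E\<^sup>2 (1 - v\<^sup>2) = -Q\<close> along \<open>\<eta>\<close>.\<close>

lemma log_deriv_E: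
  assumes x: "x \<in> W"
  shows "lie_fun \<eta> E x / E x = - lie_fun \<eta> Q x / (2 * (R x)\<^sup>2) + v x * lie_fun \<eta> v x / (1 - (v x)\<^sup>2)"
proof -
  have xU: "x \<in> U" using x by (rule W_in_U)
  have Ed: "E differentiable (at x)" and vd: "v differentiable (at x)"
    using E_differentiable[OF xU] v_differentiable[OF x] .
  have "lie_fun \<eta> (\<lambda>y. (E y * E y) * (1 - v y * v y)) x = lie_fun \<eta> (\<lambda>y. (-1) * Q y) x"
    by (rule lie_fun_cong_open[OF W_open x]) (metis E_sq_mult W_in_U power2_eq_square mult_minus1)
  then have deriv: "2 * E x * lie_fun \<eta> E x * (1 - (v x)\<^sup>2)
      = - lie_fun \<eta> Q x + 2 * (E x)\<^sup>2 * v x * lie_fun \<eta> v x"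
    unfolding lie_fun_mult[OF differentiable_mult[OF Ed Ed] differentiable_diff[OF differentiable_const
        differentiable_mult[OF vd vd]]] lie_fun_mult[OF Ed Ed] lie_fun_mult[OF vd vd]
      lie_fun_diff[OF differentiable_const differentiable_mult[OF vd vd]] lie_fun_const
      lie_fun_cmult[OF Q_differentiable[OF xU]]
    by (simp add: power2_eq_square algebra_simps)
  define w where "w = 1 - (v x)\<^sup>2"
  have "E x \<noteq> 0" "w > 0"
    using E_neg[OF xU] one_minus_v_sq_pos[OF xU] unfolding w_def by auto
  moreover have "(R x)\<^sup>2 = (E x)\<^sup>2 * w"
    using E_sq_mult[OF xU] R_pos_sq(2)[OF xU] unfolding w_def by simp
  ultimately show ?thesis
    using deriv unfolding w_def[symmetric] by (simp add: field_simps power2_eq_square)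
qed

text \<open>\<open>\<Theta>\<close> is minus the logarithmic \<open>\<eta>\<close>-derivative of \<open>flux_eta = -n v E/R\<close>.\<close>

lemma expansion_eq:
  assumes x: "x \<in> W"
  shows "div_vec G \<eta> x
       = lie_fun \<eta> R x / R x - (lie_fun \<eta> n x / n x + lie_fun \<eta> v x / v x + lie_fun \<eta> E x / E x)"
proof -
  have xU: "x \<in> U" using x by (rule W_in_U)
  have nd: "n differentiable (at x)" and vd: "v differentiable (at x)" and Ed: "E differentiable (at x)"
    using n_differentiable[OF xU] v_differentiable[OF x] E_differentiable[OF xU] .
  have pos: "R x > 0" "n x > 0" "v x > 0" "E x < 0"
    using R_pos_sq(1)[OF xU] fluid_pos(1)[OF xU] v_pos[OF x] E_neg[OF xU] .
  have "lie_fun \<eta> (\<lambda>y. flux_eta y * R y) x = lie_fun \<eta> (\<lambda>y. (-1) * (n y * v y * E y)) x"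
  proof (rule lie_fun_cong_open[OF W_open x])
    fix y assume "y \<in> W"
    then have "R y > 0" using R_pos_sq(1) W_in_U by blast
    then show "flux_eta y * R y = (-1) * (n y * v y * E y)" unfolding flux_eta_def by simp
  qed
  then have "lie_fun \<eta> flux_eta x * R x + flux_eta x * lie_fun \<eta> R x
      = - (lie_fun \<eta> n x * v x * E x + n x * lie_fun \<eta> v x * E x + n x * v x * lie_fun \<eta> E x)"
    unfolding lie_fun_mult[OF flux_eta_differentiable[OF x] R_differentiable[OF xU]]
      lie_fun_cmult[OF differentiable_mult[OF differentiable_mult[OF nd vd] Ed]]
      lie_fun_mult[OF differentiable_mult[OF nd vd] Ed] lie_fun_mult[OF nd vd]
    by (simp add: algebra_simps)
  with continuity_eta[OF x] pos show ?thesis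
    unfolding flux_eta_def by (simp add: field_simps)
qed

lemma shear_xib_xib_factor:
  assumes x: "x \<in> W"
    and shear: "\<And>i j. cd_covec G (lower G \<eta>) i j x - lower G \<eta> x $ i * lower G acc x $ j
        = div_vec G \<eta> x / d * (G x $ i $ j - lower G \<eta> x $ i * lower G \<eta> x $ j)
          + \<sigma> x $ i $ j + \<omega> x $ i $ j"
    and omega: "\<And>i j. \<omega> x $ i $ j = - \<omega> x $ j $ i"
  shows "(\<Sum>i\<in>UNIV. \<Sum>j\<in>UNIV. \<sigma> x $ i $ j * \<xi>b x $ i * \<xi>b x $ j) = shear_factor d (v x) * lie_fun \<eta> v x"
proof -
  have xU: "x \<in> U" using x by (rule W_in_U)
  define K where "K = lie_fun \<eta> Q x / (2 * (R x)\<^sup>2)"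
  define Y where "Y = v x * lie_fun \<eta> v x / (1 - (v x)\<^sup>2)"
  have "div_vec G \<eta> x = - K - (- d * (- K + Y) + lie_fun \<eta> v x / v x + (- K + Y))"
    unfolding expansion_eq[OF x] log_deriv_n[OF x] log_deriv_R[OF xU] log_deriv_E[OF x] K_def Y_def
    by simp
  then have "div_vec G \<eta> x = - d * K + (d - 1) * Y - lie_fun \<eta> v x / v x"
    by (simp add: algebra_simps)
  then have "div_vec G \<eta> x / d + K = shear_factor d (v x) * lie_fun \<eta> v x"
    using d_ge_1 v_pos[OF x] v_bounds(2)[OF xU] unfolding Y_def
    by (intro shear_factor_identity) auto
  then show ?thesis
    unfolding shear_xib_xib_eq[where \<sigma> = \<sigma> and \<omega> = \<omega> and acc = acc, OF x shear omega] K_def by simp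
qed

end

text \<open>Only the \<open>\<xi>b\<xi>b\<close>-component of the shear decomposition enters, and there the acceleration
term drops out because \<open>\<eta> \<bottom> \<xi>b\<close>.\<close>

theorem theorem4:
  fixes G :: "real^'n \<Rightarrow> real^'n^'n"
    and U :: "(real^'n) set" and p :: "real^'n"
    and H :: "real \<Rightarrow> real \<Rightarrow> real"
    and n h P s T v :: "real^'n \<Rightarrow> real"
    and u \<xi> \<eta> :: "real^'n \<Rightarrow> real^'n"
    and \<sigma> \<omega> :: "real^'n \<Rightarrow> real^'n^'n"
  defines "d \<equiv> real CARD('n) - 1"
    and "\<xi>b \<equiv> (\<lambda>x. (1 / sqrt \<bar>gdot G x (\<xi> x) (\<xi> x)\<bar>) *\<^sub>R \<xi> x)"
    and "acc \<equiv> (\<lambda>x. \<chi> k. \<Sum>m\<in>UNIV. \<eta> x $ m * cd_vec G \<eta> m k x)"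
  assumes dim: "CARD('n) \<ge> 2"
    and U_open: "open U" and pU: "p \<in> U"
    and metric_smooth: "\<forall>i j. smooth_on U (\<lambda>x. G x $ i $ j)"
    and metric_lorentz: "\<forall>x\<in>U. lorentzian_matrix (G x)"
    and xi_smooth: "\<forall>i. smooth_on U (\<lambda>x. \<xi> x $ i)"
    and xi_killing: "killing_on G \<xi> U"
    and xi_timelike: "\<forall>x\<in>U. gdot G x (\<xi> x) (\<xi> x) < 0"
    and eos: "radiation_eos d H"
    and fluid: "perfect_fluid_on G U H n h P s T u"
    and C2: "Ck 2 U n" "Ck 2 U h" "Ck 2 U P" "Ck 2 U s" "Ck 2 U T" "\<forall>i. Ck 2 U (\<lambda>x. u x $ i)"
    and steady: "\<forall>x\<in>U. lie_fun \<xi> P x = 0 \<and> lie_fun \<xi> s x = 0 \<and> lie_vec \<xi> u x = 0"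
    and decomp_u: "\<forall>x\<in>U. 0 \<le> v x \<and> v x < 1 \<and>
                     u x = (1 / sqrt (1 - (v x)\<^sup>2)) *\<^sub>R (\<xi>b x + v x *\<^sub>R \<eta> x)"
    and eta_unit: "\<forall>x\<in>U. gdot G x (\<eta> x) (\<eta> x) = 1 \<and> gdot G x (\<xi>b x) (\<eta> x) = 0"
    and eta_inv: "\<forall>x\<in>U. lie_vec \<xi> \<eta> x = 0"
    and shear_decomp: "\<forall>x\<in>U. \<forall>i j.
          cd_covec G (lower G \<eta>) i j x - lower G \<eta> x $ i * lower G acc x $ j
            = div_vec G \<eta> x / d * (G x $ i $ j - lower G \<eta> x $ i * lower G \<eta> x $ j)
              + \<sigma> x $ i $ j + \<omega> x $ i $ j"
    and sigma_sym: "\<forall>x\<in>U. \<forall>i j. \<sigma> x $ i $ j = \<sigma> x $ j $ i"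
    and sigma_tracefree: "\<forall>x\<in>U. (\<Sum>i\<in>UNIV. \<Sum>j\<in>UNIV. ginv G x $ i $ j * \<sigma> x $ i $ j) = 0"
    and omega_antisym: "\<forall>x\<in>U. \<forall>i j. \<omega> x $ i $ j = - \<omega> x $ j $ i"
    and sonic: "v p = 1 / sqrt d"
  shows "(\<Sum>i\<in>UNIV. \<Sum>j\<in>UNIV. \<sigma> p $ i $ j * \<xi>b p $ i * \<xi>b p $ j) = 0 \<and>
         lie_fun \<eta> (\<lambda>x. \<Sum>i\<in>UNIV. \<Sum>j\<in>UNIV. \<sigma> x $ i $ j * \<xi>b x $ i * \<xi>b x $ j) p \<ge> 0"
proof -
  interpret steady_radiation_flow G U H n h P s T v u \<xi> \<eta> \<xi>b d
  proof unfold_locales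
    show "d = real CARD('n) - 1" using assms(1) by simp
    show "\<xi>b = (\<lambda>x. (1 / sqrt \<bar>gdot G x (\<xi> x) (\<xi> x)\<bar>) *\<^sub>R \<xi> x)" using assms(2) by simp
  qed (fact assms)+
  have v_p: "v p > 0" "v p < 1" "(v p)\<^sup>2 = 1 / d"
    using sonic d_ge_1 v_bounds(2)[OF pU] by (auto simp: power_divide)
  have p_W: "p \<in> W" unfolding W_def using pU v_p(1) by simp
  note F = shear_factor_sonic[OF v_p]
  show ?thesis
  proof (rule lie_fun_at_root_of_factor[where S = "\<lambda>x. \<Sum>i\<in>UNIV. \<Sum>j\<in>UNIV. \<sigma> x $ i $ j * \<xi>b x $ i * \<xi>b x $ j",
        OF W_open p_W _ F(2,1) _ v_differentiable[OF p_W] lie_fun_v_differentiable[OF p_W]])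
    show "\<And>y. y \<in> W \<Longrightarrow> (\<Sum>i\<in>UNIV. \<Sum>j\<in>UNIV. \<sigma> y $ i $ j * \<xi>b y $ i * \<xi>b y $ j)
        = shear_factor d (v y) * lie_fun \<eta> v y"
      using shear_xib_xib_factor shear_decomp omega_antisym W_in_U by blast
    show "0 \<le> 2 / (1 - (v p)\<^sup>2)" using one_minus_v_sq_pos[OF pU] by simp
  qed
qed

end
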